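(* Let $k$ be a difference field and $D$ a finitely generated difference $k$-algebra which is an integral domain. Then for some $n$, $\sigma^n(D)$ is a difference domain (i.e. $\sigma$ is injective on $\sigma^n(D)$). In fact, if $R$ is a finitely generated $k$-subalgebra of $D$ generating $D$ as a difference ring, and $b$ is the dimension growth degree of $D$ with respect to $R$, then one can take $n\le b$.
   Context: A difference $k$-algebra is a $k$-algebra with an endomorphism $\sigma$ extending that of $k$. For $R$ as in the statement, let $R_m$ be the subring of $D$ generated by $R\cup\sigma(R)\cup\dots\cup\sigma^{m-1}(R)$ and $c(m)$ the transcendence degree over $k$ of its fraction field; there are integers $a,b$ with $c(m)=am+b$ for all sufficiently large $m$, and $b$ is called the dimension growth degree. *)

theory Defs
  imports Main "HOL-Computational_Algebra.Fraction_Field"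
begin

definition is_subring :: "'d::comm_ring_1 set \<Rightarrow> bool" where
  "is_subring S \<longleftrightarrow> 0 \<in> S \<and> 1 \<in> S \<and> (\<forall>x\<in>S. \<forall>y\<in>S. x + y \<in> S \<and> x * y \<in> S \<and> - x \<in> S)"

definition ring_gen :: "'d::comm_ring_1 set \<Rightarrow> 'd set" where
  "ring_gen A = \<Inter> {S. A \<subseteq> S \<and> is_subring S}"

definition is_subfield :: "'d::idom set \<Rightarrow> bool" where
  "is_subfield K \<longleftrightarrow> is_subring K \<and> (\<forall>x\<in>K. x \<noteq> 0 \<longrightarrow> (\<exists>y\<in>K. x * y = 1))"

definition ring_endo :: "('d::comm_ring_1 \<Rightarrow> 'd) \<Rightarrow> bool" where
  "ring_endo \<sigma> \<longleftrightarrow> \<sigma> 1 = 1 \<and> (\<forall>x y. \<sigma> (x + y) = \<sigma> x + \<sigma> y \<and> \<sigma> (x * y) = \<sigma> x * \<sigma> y)"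

text \<open>Polynomials are finitely supported maps from exponent vectors (supported in X) to F.\<close>
definition alg_indep :: "'f::field set \<Rightarrow> 'f set \<Rightarrow> bool" where
  "alg_indep F X \<longleftrightarrow> finite X \<and>
     (\<forall>c :: ('f \<Rightarrow> nat) \<Rightarrow> 'f.
        finite {e. c e \<noteq> 0} \<and> (\<forall>e. c e \<in> F) \<and>
        (\<forall>e. c e \<noteq> 0 \<longrightarrow> (\<forall>x. x \<notin> X \<longrightarrow> e x = 0)) \<and>
        (\<Sum>e | c e \<noteq> 0. c e * (\<Prod>x\<in>X. x ^ e x)) = 0
        \<longrightarrow> (\<forall>e. c e = 0))"

definition trdeg :: "'f::field set \<Rightarrow> 'f set \<Rightarrow> nat" where
  "trdeg F L = Sup {card X | X. X \<subseteq> L \<and> alg_indep F X}"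

definition frac_of :: "'d::idom set \<Rightarrow> 'd fract set" where
  "frac_of A = {Fract a b | a b. a \<in> A \<and> b \<in> A \<and> b \<noteq> 0}"

definition R_m :: "('d::comm_ring_1 \<Rightarrow> 'd) \<Rightarrow> 'd set \<Rightarrow> nat \<Rightarrow> 'd set" where
  "R_m \<sigma> R m = ring_gen (\<Union>i<m. (\<sigma> ^^ i) ` R)"

definition dim_c :: "'d::idom set \<Rightarrow> ('d \<Rightarrow> 'd) \<Rightarrow> 'd set \<Rightarrow> nat \<Rightarrow> nat" where
  "dim_c K \<sigma> R m = trdeg ((\<lambda>x. Fract x 1) ` K) (frac_of (R_m \<sigma> R m))"

end

theory Submission
  imports Defs "HOL-Library.Set_Algebras" "HOL-Library.FuncSet"
begin

text \<open>Write \<open>R = K[S]\<close> with \<open>S\<close> finite, \<open>G\<^sub>m = (\<Union>i<m. \<sigma>\<^sup>i S)\<close>, and \<open>rk H\<close> for the transcendence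
  degree of \<open>K(H)\<close>, so that \<open>c(m) = rk G\<^sub>m\<close>. As \<open>G\<^sub>m\<^sub>+\<^sub>N = G\<^sub>m \<union> \<sigma>\<^sup>m G\<^sub>N\<close>, we get
  \<open>c(m + N) \<le> c(m) + rk (\<sigma>\<^sup>m G\<^sub>N)\<close>. Applying \<open>\<sigma>\<close> never raises the rank, and it lowers it
  whenever \<open>\<sigma>\<close> kills a nonzero \<open>p \<in> K[H]\<close>, because \<open>p\<close> is algebraically independent from any
  preimage of a transcendence basis of \<open>\<sigma> H\<close>. If \<open>\<sigma>\<close> is not injective on \<open>\<sigma>\<^sup>n(D)\<close>, it kills
  such an element of \<open>K[\<sigma>\<^sup>n G\<^sub>N]\<close> for all large \<open>N\<close>; if this happens for every \<open>n < m\<close>, then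
  \<open>c(m + N) + m \<le> c(m) + c(N)\<close> for large \<open>N\<close>. That cannot hold for every \<open>m\<close>, and when
  \<open>c(m) = a m + b\<close> it can only hold for \<open>m \<le> b\<close>.

  That \<open>rk\<close> is subadditive and equals the transcendence degree of the fraction field rests
  on a dimension count: if every \<open>g \<in> G\<close> is algebraic over \<open>K(X)\<close>, multiplying by a power of
  the product of the leading coefficients of their equations turns the polynomials of degree
  \<open>\<le> t\<close> in \<open>X \<union> G\<close> into combinations of monomials of degree \<open>O(t)\<close> in \<open>X\<close> times monomials
  of bounded degree in \<open>G\<close>, a space of dimension \<open>O(t\<^sup>|\<^sup>X\<^sup>|)\<close>. Hence at most \<open>|X|\<close> fractions
  of such polynomials are algebraically independent.\<close>

section \<open>Subrings and linear spans\<close>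

lemma
  assumes "is_subring C"
  shows subring_zero: "0 \<in> C" and subring_one: "1 \<in> C"
    and subring_add: "x \<in> C \<Longrightarrow> y \<in> C \<Longrightarrow> x + y \<in> C"
    and subring_mult: "x \<in> C \<Longrightarrow> y \<in> C \<Longrightarrow> x * y \<in> C"
    and subring_uminus: "x \<in> C \<Longrightarrow> - x \<in> C"
  using assms unfolding is_subring_def by auto

lemma subring_sum: "is_subring C \<Longrightarrow> (\<And>i. i \<in> I \<Longrightarrow> f i \<in> C) \<Longrightarrow> sum f I \<in> C"
  by (induction I rule: infinite_finite_induct) (auto intro: subring_zero subring_add)

lemma subring_UN_mono:
  fixes A :: "nat \<Rightarrow> 'a::comm_ring_1 set"
  assumes "mono A" "\<And>M. is_subring (A M)"
  shows "is_subring (\<Union>M. A M)"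
  unfolding is_subring_def
proof (intro conjI ballI)
  show "0 \<in> (\<Union>M. A M)" "1 \<in> (\<Union>M. A M)"
    using subring_zero[OF assms(2)] subring_one[OF assms(2)] by auto
  fix x y assume "x \<in> (\<Union>M. A M)" "y \<in> (\<Union>M. A M)"
  then obtain M1 M2 where "x \<in> A M1" "y \<in> A M2" by auto
  then have "x \<in> A (M1 + M2)" "y \<in> A (M1 + M2)"
    using monoD[OF assms(1), of M1 "M1 + M2"] monoD[OF assms(1), of M2 "M1 + M2"] by auto
  then have "x + y \<in> A (M1 + M2)" "x * y \<in> A (M1 + M2)" "- x \<in> A (M1 + M2)"
    using subring_add[OF assms(2)] subring_mult[OF assms(2)] subring_uminus[OF assms(2)] by auto
  then show "x + y \<in> (\<Union>M. A M)" "x * y \<in> (\<Union>M. A M)" "- x \<in> (\<Union>M. A M)" by auto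
qed

lemma subfield_subring: "is_subfield F \<Longrightarrow> is_subring F"
  by (simp add: is_subfield_def)

lemma subfield_inverse:
  fixes F :: "'f::field set"
  assumes "is_subfield F" "x \<in> F"
  shows "inverse x \<in> F"
proof (cases "x = 0")
  case True
  then show ?thesis using assms subring_zero subfield_subring by fastforce
next
  case False
  then obtain y where "y \<in> F" "x * y = 1" using assms unfolding is_subfield_def by blast
  then show ?thesis using False by (metis inverse_unique)
qed

lemma subfield_divide:
  fixes F :: "'f::field set"
  assumes "is_subfield F" "x \<in> F" "y \<in> F"
  shows "x / y \<in> F"
  unfolding divide_inverse
  using assms subfield_inverse subring_mult[OF subfield_subring] by blast

inductive_set lin_span :: "'a::comm_ring_1 set \<Rightarrow> 'a set \<Rightarrow> 'a set" for C B where
  zero: "0 \<in> lin_span C B"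
| base: "c \<in> C \<Longrightarrow> b \<in> B \<Longrightarrow> c * b \<in> lin_span C B"
| add: "x \<in> lin_span C B \<Longrightarrow> y \<in> lin_span C B \<Longrightarrow> x + y \<in> lin_span C B"

lemma lin_span_smult:
  assumes C: "is_subring C" and c: "c \<in> C" and x: "x \<in> lin_span C B"
  shows "c * x \<in> lin_span C B"
  using x
proof induction
  case (base c' b)
  then show ?case
    using lin_span.base[OF subring_mult[OF C c], of c' b B] by (simp add: mult.assoc)
qed (auto simp: distrib_left intro: lin_span.intros)

lemma lin_span_uminus: "is_subring C \<Longrightarrow> x \<in> lin_span C B \<Longrightarrow> - x \<in> lin_span C B"
  using lin_span_smult[of C "- 1" x B] subring_uminus subring_one by fastforce

lemma lin_span_diff:
  "is_subring C \<Longrightarrow> x \<in> lin_span C B \<Longrightarrow> y \<in> lin_span C B \<Longrightarrow> x - y \<in> lin_span C B"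
  using lin_span_uminus lin_span.add by (metis diff_conv_add_uminus)

lemma lin_span_mono: "B \<subseteq> B' \<Longrightarrow> lin_span C B \<subseteq> lin_span C B'"
proof
  fix x assume "B \<subseteq> B'" "x \<in> lin_span C B"
  then show "x \<in> lin_span C B'"
    by (induction rule: lin_span.induct[OF \<open>x \<in> lin_span C B\<close>]) (auto intro: lin_span.intros)
qed

lemma lin_span_superset: "is_subring C \<Longrightarrow> B \<subseteq> lin_span C B"
  using lin_span.base[of 1 C _ B] subring_one by fastforce

lemma lin_span_sum: "(\<And>i. i \<in> I \<Longrightarrow> f i \<in> lin_span C B) \<Longrightarrow> sum f I \<in> lin_span C B"
  by (induction I rule: infinite_finite_induct) (auto intro: lin_span.intros)

lemma lin_span_empty: "x \<in> lin_span C {} \<Longrightarrow> x = 0"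
  by (induction rule: lin_span.induct) auto

lemma lin_span_mult:
  assumes C: "is_subring C" and x: "x \<in> lin_span C A" and y: "y \<in> lin_span C B"
  shows "x * y \<in> lin_span C (A * B)"
  using x
proof induction
  case (base c a)
  from y have "c * a * y \<in> lin_span C (A * B)"
  proof induction
    case (base c' b)
    have "c * a * (c' * b) = (c * c') * (a * b)" by (simp add: ac_simps)
    then show ?case
      using lin_span.base[OF subring_mult[OF C \<open>c \<in> C\<close> \<open>c' \<in> C\<close>]] \<open>a \<in> A\<close> \<open>b \<in> B\<close>
      by (metis set_times_intro)
  qed (auto simp: distrib_left intro: lin_span.intros)
  then show ?case by simp
qed (auto simp: distrib_right intro: lin_span.intros)

lemma lin_span_insert:
  assumes C: "is_subring C" and "x \<in> lin_span C (insert b B)"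
  shows "\<exists>a\<in>C. \<exists>w\<in>lin_span C B. x = a * b + w"
  using assms(2)
proof induction
  case zero
  then show ?case using subring_zero[OF C] lin_span.zero by force
next
  case (base c b')
  show ?case
  proof (cases "b' = b")
    case True
    then show ?thesis using base lin_span.zero by force
  next
    case False
    then show ?thesis using base lin_span.base[of c C b' B] subring_zero[OF C] by force
  qed
next
  case (add x y)
  then obtain a1 w1 a2 w2 where "a1 \<in> C" "w1 \<in> lin_span C B" "x = a1 * b + w1"
    "a2 \<in> C" "w2 \<in> lin_span C B" "y = a2 * b + w2" by blast
  then show ?case
    by (intro bexI[of _ "a1 + a2"] bexI[of _ "w1 + w2"])
      (auto simp: algebra_simps intro: lin_span.add subring_add[OF C])
qed

text \<open>One step of Gaussian elimination, pivoting on \<open>e0\<close>.\<close>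

lemma lin_relation_eliminate:
  fixes F :: "'f::field set"
  assumes F: "is_subfield F" and E: "finite E" "e0 \<in> E"
    and a: "\<forall>e\<in>E. a e \<in> F" "a e0 \<noteq> 0"
    and k: "\<forall>e\<in>E - {e0}. k e \<in> F" "\<exists>e\<in>E - {e0}. k e \<noteq> 0"
    and rel: "(\<Sum>e\<in>E - {e0}. k e * (v e - a e / a e0 * v e0)) = 0"
  shows "\<exists>k. (\<forall>e\<in>E. k e \<in> F) \<and> (\<exists>e\<in>E. k e \<noteq> 0) \<and> (\<Sum>e\<in>E. k e * v e) = 0"
proof -
  have C: "is_subring F" using F by (rule subfield_subring)
  define k' where "k' e = (if e = e0 then - (\<Sum>e'\<in>E - {e0}. k e' * (a e' / a e0)) else k e)" for e
  have "(\<Sum>e\<in>E. k' e * v e) = k' e0 * v e0 + (\<Sum>e\<in>E - {e0}. k e * v e)"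
    using E by (simp add: sum.remove k'_def)
  also have "\<dots> = (\<Sum>e\<in>E - {e0}. k e * v e) - (\<Sum>e\<in>E - {e0}. k e * (a e / a e0) * v e0)"
    by (simp add: k'_def sum_distrib_right)
  also have "\<dots> = (\<Sum>e\<in>E - {e0}. k e * (v e - a e / a e0 * v e0))"
    by (simp add: sum_subtractf[symmetric] right_diff_distrib mult.assoc)
  finally have "(\<Sum>e\<in>E. k' e * v e) = 0" using rel by simp
  moreover have "k' e \<in> F" if "e \<in> E" for e
  proof (cases "e = e0")
    case True
    have "(\<Sum>e'\<in>E - {e0}. k e' * (a e' / a e0)) \<in> F"
      using k a E(2) by (intro subring_sum[OF C] subring_mult[OF C] subfield_divide[OF F]) auto
    then show ?thesis using True subring_uminus[OF C] by (simp add: k'_def)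
  next
    case False
    then show ?thesis using k that by (simp add: k'_def)
  qed
  moreover have "\<exists>e\<in>E. k' e \<noteq> 0" using k unfolding k'_def by auto
  ultimately show ?thesis by blast
qed

lemma lin_span_card_dependent:
  fixes F :: "'f::field set"
  assumes F: "is_subfield F" and "finite B"
  shows "finite E \<Longrightarrow> card B < card E \<Longrightarrow> \<forall>e\<in>E. v e \<in> lin_span F B \<Longrightarrow>
     \<exists>k. (\<forall>e\<in>E. k e \<in> F) \<and> (\<exists>e\<in>E. k e \<noteq> 0) \<and> (\<Sum>e\<in>E. k e * v e) = 0"
  using \<open>finite B\<close>
proof (induction B arbitrary: E v rule: finite_induct)
  case empty
  then obtain e0 where "e0 \<in> E" by fastforce
  moreover have "\<forall>e\<in>E. v e = 0" using empty lin_span_empty by blast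
  ultimately show ?case
    using subring_one[OF subfield_subring[OF F]] subring_zero[OF subfield_subring[OF F]]
    by (intro exI[of _ "\<lambda>e. if e = e0 then 1 else 0"]) auto
next
  case (insert b B E v)
  have C: "is_subring F" using F by (rule subfield_subring)
  have "\<forall>e\<in>E. \<exists>a\<in>F. \<exists>w\<in>lin_span F B. v e = a * b + w"
    using insert.prems(3) lin_span_insert[OF C] by blast
  then obtain a w where aw: "\<forall>e\<in>E. a e \<in> F \<and> w e \<in> lin_span F B \<and> v e = a e * b + w e"
    by metis
  show ?case
  proof (cases "\<forall>e\<in>E. a e = 0")
    case True
    then have "\<forall>e\<in>E. v e \<in> lin_span F B" using aw by simp
    moreover have "card B < card E" using insert by simp
    ultimately show ?thesis using insert.IH insert.prems(1) by blast
  next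
    case False
    then obtain e0 where e0: "e0 \<in> E" "a e0 \<noteq> 0" by blast
    have "v e - a e / a e0 * v e0 = w e - a e / a e0 * w e0" if "e \<in> E" for e
      using aw that e0 by (auto simp: field_simps)
    moreover have "w e - a e / a e0 * w e0 \<in> lin_span F B" if "e \<in> E" for e
      using aw e0 that by (intro lin_span_diff[OF C] lin_span_smult[OF C] subfield_divide[OF F]) auto
    ultimately have "\<forall>e\<in>E - {e0}. v e - a e / a e0 * v e0 \<in> lin_span F B" by simp
    moreover have "card B < card (E - {e0})" using insert e0 by auto
    ultimately obtain k where k: "\<forall>e\<in>E - {e0}. k e \<in> F" "\<exists>e\<in>E - {e0}. k e \<noteq> 0"
      "(\<Sum>e\<in>E - {e0}. k e * (v e - a e / a e0 * v e0)) = 0"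
      using insert.IH[of "E - {e0}" "\<lambda>e. v e - a e / a e0 * v e0"] insert.prems(1) by blast
    have "\<forall>e\<in>E. a e \<in> F" using aw by blast
    from lin_relation_eliminate[OF F insert.prems(1) e0(1) this e0(2) k] show ?thesis .
  qed
qed

section \<open>Monomials and algebraic independence over a subring\<close>

definition monomial :: "'a::comm_ring_1 set \<Rightarrow> ('a \<Rightarrow> nat) \<Rightarrow> 'a" where
  "monomial X e = (\<Prod>x\<in>X. x ^ e x)"

definition exponents :: "'a set \<Rightarrow> nat \<Rightarrow> ('a \<Rightarrow> nat) set" where
  "exponents X D = PiE X (\<lambda>_. {..D})"

definition monomials :: "'a::comm_ring_1 set \<Rightarrow> nat \<Rightarrow> 'a set" where
  "monomials X D = monomial X ` exponents X D"

definition alg_indep_over :: "'a::comm_ring_1 set \<Rightarrow> 'a set \<Rightarrow> bool" where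
  "alg_indep_over C X \<longleftrightarrow> finite X \<and>
     (\<forall>D k. (\<forall>e\<in>exponents X D. k e \<in> C) \<and> (\<Sum>e\<in>exponents X D. k e * monomial X e) = 0
        \<longrightarrow> (\<forall>e\<in>exponents X D. k e = 0))"

lemma finite_exponents: "finite X \<Longrightarrow> finite (exponents X D)"
  unfolding exponents_def by (auto intro: finite_PiE)

lemma card_exponents: "finite X \<Longrightarrow> card (exponents X D) = (D + 1) ^ card X"
  unfolding exponents_def by (simp add: card_PiE)

lemma finite_monomials: "finite X \<Longrightarrow> finite (monomials X D)"
  unfolding monomials_def by (simp add: finite_exponents)

lemma card_monomials_le: "finite X \<Longrightarrow> card (monomials X D) \<le> (D + 1) ^ card X"
  unfolding monomials_def by (metis card_exponents card_image_le finite_exponents)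

lemma monomials_mono: "D \<le> D' \<Longrightarrow> monomials X D \<subseteq> monomials X D'"
  unfolding monomials_def exponents_def by (intro image_mono) (auto simp: PiE_def Pi_def)

lemma monomials_mult: "monomials X a * monomials X b \<subseteq> monomials X (a + b)"
proof
  fix m assume "m \<in> monomials X a * monomials X b"
  then obtain e e' where e: "e \<in> exponents X a" "e' \<in> exponents X b" "m = monomial X e * monomial X e'"
    unfolding monomials_def by (auto elim!: set_times_elim)
  define f where "f = restrict (\<lambda>x. e x + e' x) X"
  have "f \<in> exponents X (a + b)"
    using e unfolding f_def exponents_def by (auto simp: PiE_def Pi_def add_mono)
  moreover have "monomial X f = m"
    unfolding e monomial_def f_def by (simp add: power_add prod.distrib)
  ultimately show "m \<in> monomials X (a + b)" unfolding monomials_def by blast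
qed

lemma one_in_monomials: "1 \<in> monomials X D"
proof -
  have "restrict (\<lambda>_. 0) X \<in> exponents X D" unfolding exponents_def by auto
  moreover have "monomial X (restrict (\<lambda>_. 0) X) = 1" unfolding monomial_def by simp
  ultimately show ?thesis unfolding monomials_def by (metis image_eqI)
qed

lemma var_in_monomials:
  assumes "finite X" "x \<in> X"
  shows "x \<in> monomials X 1"
proof -
  define f where "f = restrict (\<lambda>y. if y = x then 1 else 0::nat) X"
  have "f \<in> exponents X 1" unfolding exponents_def f_def by auto
  moreover have "monomial X f = (\<Prod>y\<in>X. if y = x then y else 1)"
    unfolding monomial_def f_def by (intro prod.cong) auto
  moreover have "\<dots> = x" using assms by (simp add: prod.delta')
  ultimately show ?thesis unfolding monomials_def by (metis image_eqI)
qed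

lemma monomials_subset:
  assumes "finite X'" "X \<subseteq> X'"
  shows "monomials X D \<subseteq> monomials X' D"
proof
  fix m assume "m \<in> monomials X D"
  then obtain e where e: "e \<in> exponents X D" "m = monomial X e" unfolding monomials_def by auto
  define f where "f = restrict (\<lambda>y. if y \<in> X then e y else 0) X'"
  have "f \<in> exponents X' D" using e unfolding exponents_def f_def by (auto simp: PiE_def Pi_def)
  moreover have "monomial X' f = (\<Prod>y\<in>X'. if y \<in> X then y ^ e y else 1)"
    unfolding monomial_def f_def by (intro prod.cong) auto
  moreover have "\<dots> = m"
    using assms unfolding e monomial_def by (simp add: prod.If_cases Int_absorb1)
  ultimately show "m \<in> monomials X' D" unfolding monomials_def by (metis image_eqI)
qed

lemma lin_span_monomials_mult:
  assumes "is_subring C" "x \<in> lin_span C (monomials X a)" "y \<in> lin_span C (monomials X b)"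
  shows "x * y \<in> lin_span C (monomials X (a + b))"
  using lin_span_mult[OF assms] lin_span_mono[OF monomials_mult] by blast

lemma alg_indep_over_finite: "alg_indep_over C X \<Longrightarrow> finite X"
  unfolding alg_indep_over_def by simp

lemma alg_indep_overD:
  assumes "alg_indep_over C X" "\<forall>e\<in>exponents X D. k e \<in> C"
    "(\<Sum>e\<in>exponents X D. k e * monomial X e) = 0" "e \<in> exponents X D"
  shows "k e = 0"
  using assms unfolding alg_indep_over_def by blast

lemma alg_indep_over_empty: "is_subring C \<Longrightarrow> alg_indep_over C {}"
  unfolding alg_indep_over_def exponents_def monomial_def by simp

lemma zero_notin_alg_indep_over:
  assumes C: "is_subring C" and ind: "alg_indep_over C Y"
  shows "0 \<notin> Y"
proof
  assume "0 \<in> Y"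
  define e0 where "e0 = restrict (\<lambda>y. if y = 0 then 1 else 0::nat) Y"
  have e0: "e0 \<in> exponents Y 1" unfolding e0_def exponents_def by auto
  have "monomial Y e0 = 0"
    unfolding monomial_def e0_def using \<open>0 \<in> Y\<close> alg_indep_over_finite[OF ind] by (intro prod_zero) auto
  moreover have "(\<Sum>e\<in>exponents Y 1. (if e = e0 then 1 else 0) * monomial Y e)
      = (\<Sum>e\<in>exponents Y 1. if e = e0 then monomial Y e else 0)"
    by (intro sum.cong) auto
  ultimately have "(\<Sum>e\<in>exponents Y 1. (if e = e0 then 1 else 0) * monomial Y e) = 0"
    using e0 finite_exponents[OF alg_indep_over_finite[OF ind]] by (simp add: sum.delta')
  moreover have "\<forall>e\<in>exponents Y 1. (if e = e0 then 1 else 0) \<in> C"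
    using subring_zero[OF C] subring_one[OF C] by auto
  ultimately show False using alg_indep_overD[OF ind _ _ e0] by fastforce
qed

text \<open>\<^const>\<open>alg_indep\<close> takes polynomials as finitely supported coefficient functions on
  all exponent vectors; extending by zero identifies them with bounded exponent vectors.\<close>

definition extend_zero :: "'a set \<Rightarrow> ('a \<Rightarrow> nat) \<Rightarrow> 'a \<Rightarrow> nat" where
  "extend_zero Z e = (\<lambda>x. if x \<in> Z then e x else 0)"

lemma alg_indepD:
  assumes "alg_indep F X" "finite {e. c e \<noteq> 0}" "\<forall>e. c e \<in> F"
    "\<forall>e. c e \<noteq> 0 \<longrightarrow> (\<forall>x. x \<notin> X \<longrightarrow> e x = 0)"
    "(\<Sum>e | c e \<noteq> 0. c e * (\<Prod>x\<in>X. x ^ e x)) = 0"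
  shows "c e = 0"
  using assms unfolding alg_indep_def by blast

lemma restrict_extend_zero: "e \<in> exponents Z D \<Longrightarrow> restrict (extend_zero Z e) Z = e"
  unfolding exponents_def extend_zero_def by (auto simp: PiE_def extensional_def fun_eq_iff)

lemma extend_zero_restrict: "\<forall>x. x \<notin> Z \<longrightarrow> e x = 0 \<Longrightarrow> extend_zero Z (restrict e Z) = e"
  unfolding extend_zero_def by (auto simp: fun_eq_iff)

lemma sum_support_eq_sum_exponents:
  fixes c :: "('a::comm_ring_1 \<Rightarrow> nat) \<Rightarrow> 'a"
  assumes fin: "finite Z"
    and supp: "\<And>e. c e \<noteq> 0 \<Longrightarrow> (\<forall>x. x \<notin> Z \<longrightarrow> e x = 0) \<and> (\<forall>x\<in>Z. e x \<le> D)"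
  shows "(\<Sum>e | c e \<noteq> 0. c e * (\<Prod>x\<in>Z. x ^ e x))
    = (\<Sum>e\<in>exponents Z D. c (extend_zero Z e) * monomial Z e)"
proof -
  let ?E = "exponents Z D"
  have inj: "inj_on (extend_zero Z) ?E"
    by (rule inj_on_inverseI[where g = "\<lambda>e. restrict e Z"]) (rule restrict_extend_zero)
  have sub: "{e. c e \<noteq> 0} \<subseteq> extend_zero Z ` ?E"
  proof
    fix e assume "e \<in> {e. c e \<noteq> 0}"
    then have "\<forall>x. x \<notin> Z \<longrightarrow> e x = 0" "\<forall>x\<in>Z. e x \<le> D" using supp by auto
    then have "e = extend_zero Z (restrict e Z)" "restrict e Z \<in> ?E"
      unfolding exponents_def by (auto simp: extend_zero_restrict)
    then show "e \<in> extend_zero Z ` ?E" by blast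
  qed
  have "(\<Sum>e | c e \<noteq> 0. c e * (\<Prod>x\<in>Z. x ^ e x)) = (\<Sum>e\<in>extend_zero Z ` ?E. c e * (\<Prod>x\<in>Z. x ^ e x))"
    by (rule sum.mono_neutral_left) (use sub finite_exponents[OF fin] in auto)
  also have "\<dots> = (\<Sum>e\<in>?E. c (extend_zero Z e) * (\<Prod>x\<in>Z. x ^ extend_zero Z e x))"
    by (rule sum.reindex[OF inj, unfolded comp_def])
  also have "\<dots> = (\<Sum>e\<in>?E. c (extend_zero Z e) * monomial Z e)"
    unfolding monomial_def extend_zero_def by simp
  finally show ?thesis .
qed

lemma alg_indep_over_if_alg_indep:
  fixes F :: "'f::field set"
  assumes F: "is_subring F" and ai: "alg_indep F Z"
  shows "alg_indep_over F Z"
  unfolding alg_indep_over_def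
proof (intro conjI allI impI)
  show fin: "finite Z" using ai unfolding alg_indep_def by simp
  fix D k assume H: "(\<forall>e\<in>exponents Z D. k e \<in> F) \<and> (\<Sum>e\<in>exponents Z D. k e * monomial Z e) = 0"
  let ?E = "exponents Z D"
  define c where "c e' = (if e' \<in> extend_zero Z ` ?E then k (restrict e' Z) else 0)" for e'
  have c_ext: "c (extend_zero Z e) = k e" if "e \<in> ?E" for e
    using that restrict_extend_zero[OF that] unfolding c_def by auto
  have supp: "(\<forall>x. x \<notin> Z \<longrightarrow> e x = 0) \<and> (\<forall>x\<in>Z. e x \<le> D)" if "c e \<noteq> 0" for e
    using that unfolding c_def extend_zero_def exponents_def by (auto split: if_splits)
  have "{e. c e \<noteq> 0} \<subseteq> extend_zero Z ` ?E" unfolding c_def by auto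
  then have "finite {e. c e \<noteq> 0}" using finite_exponents[OF fin] finite_subset by blast
  moreover have "\<forall>e. c e \<in> F"
  proof
    fix e show "c e \<in> F"
    proof (cases "e \<in> extend_zero Z ` ?E")
      case True
      then show ?thesis using H c_ext by auto
    next
      case False
      then show ?thesis using subring_zero[OF F] by (simp add: c_def)
    qed
  qed
  moreover have "\<forall>e. c e \<noteq> 0 \<longrightarrow> (\<forall>x. x \<notin> Z \<longrightarrow> e x = 0)" using supp by blast
  moreover have "(\<Sum>e | c e \<noteq> 0. c e * (\<Prod>x\<in>Z. x ^ e x)) = 0"
    using H c_ext by (simp add: sum_support_eq_sum_exponents[OF fin supp])
  ultimately have c0: "c e = 0" for e using alg_indepD[OF ai, of c] by blast
  show "\<forall>e\<in>?E. k e = 0"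
  proof
    fix e assume "e \<in> ?E"
    from c_ext[OF this] show "k e = 0" by (simp add: c0)
  qed
qed

lemma alg_indep_if_alg_indep_over:
  fixes F :: "'f::field set"
  assumes im: "alg_indep_over F Z"
  shows "alg_indep F Z"
  unfolding alg_indep_def
proof (intro conjI allI impI)
  show fin: "finite Z" using im by (rule alg_indep_over_finite)
  fix c :: "('f \<Rightarrow> nat) \<Rightarrow> 'f"
  assume H: "finite {e. c e \<noteq> 0} \<and> (\<forall>e. c e \<in> F) \<and> (\<forall>e. c e \<noteq> 0 \<longrightarrow> (\<forall>x. x \<notin> Z \<longrightarrow> e x = 0)) \<and>
      (\<Sum>e | c e \<noteq> 0. c e * (\<Prod>x\<in>Z. x ^ e x)) = 0"
  define D where "D = Max (insert 0 ((\<lambda>(e, x). e x) ` ({e. c e \<noteq> 0} \<times> Z)))"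
  have "e x \<le> D" if "c e \<noteq> 0" "x \<in> Z" for e x
    unfolding D_def using H fin that by (intro Max_ge) auto
  then have supp: "(\<forall>x. x \<notin> Z \<longrightarrow> e x = 0) \<and> (\<forall>x\<in>Z. e x \<le> D)" if "c e \<noteq> 0" for e
    using H that by blast
  have sum0: "(\<Sum>e\<in>exponents Z D. c (extend_zero Z e) * monomial Z e) = 0"
    using H by (simp add: sum_support_eq_sum_exponents[OF fin supp])
  have cF: "\<forall>e. c e \<in> F" using H by blast
  have k0: "c (extend_zero Z e) = 0" if "e \<in> exponents Z D" for e
    by (rule alg_indep_overD[OF im _ sum0 that]) (simp add: cF)
  fix e
  show "c e = 0"
  proof (cases "c e = 0")
    case False
    then have "\<forall>x. x \<notin> Z \<longrightarrow> e x = 0" "\<forall>x\<in>Z. e x \<le> D" using supp by auto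
    then have "restrict e Z \<in> exponents Z D" "extend_zero Z (restrict e Z) = e"
      unfolding exponents_def by (auto simp: extend_zero_restrict)
    then show ?thesis using k0 by fastforce
  qed
qed

lemma exponents_insert: "exponents (insert p X) D = (\<lambda>(y, g). g(p := y)) ` ({..D} \<times> exponents X D)"
  unfolding exponents_def by (rule PiE_insert_eq)

lemma exponents_insertE:
  assumes "e \<in> exponents (insert p X) D"
  obtains j e' where "j \<le> D" "e' \<in> exponents X D" "e = e'(p := j)"
  using assms unfolding exponents_insert by auto

lemma exponents_upd: "e \<in> exponents X D \<Longrightarrow> j \<le> D \<Longrightarrow> e(p := j) \<in> exponents (insert p X) D"
  unfolding exponents_insert by force

lemma sum_exponents_insert:
  assumes "p \<notin> X"
  shows "(\<Sum>e\<in>exponents (insert p X) D. f e) = (\<Sum>j\<le>D. \<Sum>e\<in>exponents X D. f (e(p := j)))"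
proof -
  have inj: "inj_on (\<lambda>(y, g). g(p := y)) ({..D} \<times> exponents X D)"
    unfolding exponents_def using inj_combinator[OF assms, of "\<lambda>_. {..D}"] by simp
  have "(\<Sum>e\<in>exponents (insert p X) D. f e) = (\<Sum>(j, e)\<in>{..D} \<times> exponents X D. f (e(p := j)))"
    unfolding exponents_insert by (subst sum.reindex[OF inj]) (simp add: case_prod_unfold comp_def)
  also have "\<dots> = (\<Sum>j\<le>D. \<Sum>e\<in>exponents X D. f (e(p := j)))"
    by (rule sum.cartesian_product[symmetric])
  finally show ?thesis .
qed

lemma monomial_insert_upd:
  assumes "p \<notin> X" "finite X"
  shows "monomial (insert p X) (e(p := j)) = p ^ j * monomial X e"
proof -
  have "(\<Prod>x\<in>X. x ^ (e(p := j)) x) = (\<Prod>x\<in>X. x ^ e x)"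
    using assms(1) by (intro prod.cong) auto
  then show ?thesis using assms unfolding monomial_def by simp
qed

lemma sum_exponents_insert_slices:
  assumes "p \<notin> X" "finite X"
  shows "(\<Sum>e\<in>exponents (insert p X) D. k e * monomial (insert p X) e)
     = (\<Sum>j\<le>D. p ^ j * (\<Sum>e\<in>exponents X D. k (e(p := j)) * monomial X e))"
  unfolding sum_exponents_insert[OF assms(1)] monomial_insert_upd[OF assms]
  by (simp add: sum_distrib_left ac_simps)

section \<open>Ring homomorphisms and independence\<close>

definition ring_hom :: "('a::comm_ring_1 \<Rightarrow> 'b::comm_ring_1) \<Rightarrow> bool" where
  "ring_hom \<phi> \<longleftrightarrow> \<phi> 1 = 1 \<and> (\<forall>x y. \<phi> (x + y) = \<phi> x + \<phi> y \<and> \<phi> (x * y) = \<phi> x * \<phi> y)"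

context
  fixes \<phi> :: "'a::comm_ring_1 \<Rightarrow> 'b::comm_ring_1"
  assumes hom: "ring_hom \<phi>"
begin

lemma ring_hom_add: "\<phi> (x + y) = \<phi> x + \<phi> y"
  and ring_hom_mult: "\<phi> (x * y) = \<phi> x * \<phi> y"
  and ring_hom_one: "\<phi> 1 = 1"
  using hom unfolding ring_hom_def by blast+

lemma ring_hom_zero: "\<phi> 0 = 0"
  using ring_hom_add[of 0 0] by simp

lemma ring_hom_uminus: "\<phi> (- x) = - \<phi> x"
  using ring_hom_add[of x "- x"] ring_hom_zero minus_unique[of "\<phi> x" "\<phi> (- x)"] by simp

lemma ring_hom_diff: "\<phi> (x - y) = \<phi> x - \<phi> y"
  using ring_hom_add[of x "- y"] ring_hom_uminus[of y] by simp

lemma ring_hom_sum: "\<phi> (sum f I) = (\<Sum>i\<in>I. \<phi> (f i))"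
  by (induction I rule: infinite_finite_induct) (auto simp: ring_hom_zero ring_hom_add)

lemma ring_hom_prod: "\<phi> (prod f I) = (\<Prod>i\<in>I. \<phi> (f i))"
  by (induction I rule: infinite_finite_induct) (auto simp: ring_hom_one ring_hom_mult)

lemma ring_hom_power: "\<phi> (x ^ n) = \<phi> x ^ n"
  by (induction n) (auto simp: ring_hom_one ring_hom_mult)

lemma subring_vimage: "is_subring T \<Longrightarrow> is_subring (\<phi> -` T)"
  unfolding is_subring_def
  by (simp add: ring_hom_zero ring_hom_one ring_hom_add ring_hom_mult ring_hom_uminus)

end

lemma ring_hom_comp: "ring_hom \<phi> \<Longrightarrow> ring_hom \<psi> \<Longrightarrow> ring_hom (\<psi> \<circ> \<phi>)"
  unfolding ring_hom_def by simp

definition exponent_pullback :: "('a \<Rightarrow> 'b) \<Rightarrow> 'a set \<Rightarrow> ('b \<Rightarrow> nat) \<Rightarrow> 'a \<Rightarrow> nat" where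
  "exponent_pullback \<phi> X e = restrict (e \<circ> \<phi>) X"

lemma bij_betw_exponent_pullback:
  assumes "inj_on \<phi> X"
  shows "bij_betw (exponent_pullback \<phi> X) (exponents (\<phi> ` X) D) (exponents X D)"
proof (rule bij_betw_byWitness[where f' = "\<lambda>e. restrict (\<lambda>y. e (inv_into X \<phi> y)) (\<phi> ` X)"])
  show "\<forall>e\<in>exponents (\<phi> ` X) D. restrict (\<lambda>y. exponent_pullback \<phi> X e (inv_into X \<phi> y)) (\<phi> ` X) = e"
    unfolding exponent_pullback_def exponents_def
    by (auto simp: fun_eq_iff PiE_def extensional_def inv_into_into f_inv_into_f)
  show "\<forall>e\<in>exponents X D. exponent_pullback \<phi> X (restrict (\<lambda>y. e (inv_into X \<phi> y)) (\<phi> ` X)) = e"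
    using assms unfolding exponent_pullback_def exponents_def
    by (auto simp: fun_eq_iff PiE_def extensional_def)
  show "exponent_pullback \<phi> X ` exponents (\<phi> ` X) D \<subseteq> exponents X D"
    unfolding exponent_pullback_def exponents_def by auto
  show "(\<lambda>e. restrict (\<lambda>y. e (inv_into X \<phi> y)) (\<phi> ` X)) ` exponents X D \<subseteq> exponents (\<phi> ` X) D"
    unfolding exponents_def by (auto simp: inv_into_into)
qed

lemma ring_hom_monomial_pullback:
  assumes "ring_hom \<phi>" "inj_on \<phi> X"
  shows "\<phi> (monomial X (exponent_pullback \<phi> X e)) = monomial (\<phi> ` X) e"
  using prod.reindex[OF assms(2), of "\<lambda>y. y ^ e y"]
  unfolding monomial_def exponent_pullback_def
  by (simp add: ring_hom_prod[OF assms(1)] ring_hom_power[OF assms(1)])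

lemma ring_hom_poly:
  assumes "ring_hom \<phi>" "inj_on \<phi> X"
  shows "\<phi> (\<Sum>e\<in>exponents X D. k e * monomial X e)
    = (\<Sum>e\<in>exponents (\<phi> ` X) D. \<phi> (k (exponent_pullback \<phi> X e)) * monomial (\<phi> ` X) e)"
proof -
  have "\<phi> (\<Sum>e\<in>exponents X D. k e * monomial X e) = (\<Sum>e\<in>exponents X D. \<phi> (k e) * \<phi> (monomial X e))"
    by (simp add: ring_hom_sum[OF assms(1)] ring_hom_mult[OF assms(1)])
  also have "\<dots> = (\<Sum>e\<in>exponents (\<phi> ` X) D.
      \<phi> (k (exponent_pullback \<phi> X e)) * \<phi> (monomial X (exponent_pullback \<phi> X e)))"
    by (rule sum.reindex_bij_betw[OF bij_betw_exponent_pullback[OF assms(2)], symmetric])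
  finally show ?thesis by (simp add: ring_hom_monomial_pullback[OF assms])
qed

lemma coeffs_zero_if_ring_hom_kills_poly:
  assumes hom: "ring_hom \<phi>" and inj: "inj_on \<phi> X" and ind: "alg_indep_over B (\<phi> ` X)"
    and kA: "\<forall>e\<in>exponents X D. k e \<in> A" and AB: "\<phi> ` A \<subseteq> B"
    and ker: "\<forall>a\<in>A. \<phi> a = 0 \<longrightarrow> a = 0"
    and zero: "\<phi> (\<Sum>e\<in>exponents X D. k e * monomial X e) = 0"
  shows "\<forall>e\<in>exponents X D. k e = 0"
proof
  fix e assume e: "e \<in> exponents X D"
  have bij: "bij_betw (exponent_pullback \<phi> X) (exponents (\<phi> ` X) D) (exponents X D)"
    by (rule bij_betw_exponent_pullback[OF inj])
  have "\<phi> (k (exponent_pullback \<phi> X e')) = 0" if "e' \<in> exponents (\<phi> ` X) D" for e'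
  proof (rule alg_indep_overD[OF ind _ _ that])
    show "\<forall>e'\<in>exponents (\<phi> ` X) D. \<phi> (k (exponent_pullback \<phi> X e')) \<in> B"
      using bij_betwE[OF bij] kA AB by blast
    show "(\<Sum>e'\<in>exponents (\<phi> ` X) D. \<phi> (k (exponent_pullback \<phi> X e')) * monomial (\<phi> ` X) e') = 0"
      using zero by (simp add: ring_hom_poly[OF hom inj])
  qed
  moreover obtain e' where "e' \<in> exponents (\<phi> ` X) D" "e = exponent_pullback \<phi> X e'"
    using bij e by (auto simp: bij_betw_def)
  ultimately show "k e = 0" using kA ker e by auto
qed

lemma alg_indep_over_if_image:
  assumes "ring_hom \<phi>" "inj_on \<phi> X" "alg_indep_over B (\<phi> ` X)"
    and "\<phi> ` A \<subseteq> B" "\<forall>a\<in>A. \<phi> a = 0 \<longrightarrow> a = 0" "finite X"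
  shows "alg_indep_over A X"
  unfolding alg_indep_over_def
  using coeffs_zero_if_ring_hom_kills_poly[OF assms(1-3) _ assms(4,5)] assms(6)
  by (auto simp: ring_hom_zero[OF assms(1)])

lemma alg_indep_over_image:
  assumes hom: "ring_hom \<phi>" and "inj \<phi>" and ind: "alg_indep_over A X" and BA: "B \<subseteq> \<phi> ` A"
  shows "alg_indep_over B (\<phi> ` X)"
  unfolding alg_indep_over_def
proof (intro conjI allI impI)
  show "finite (\<phi> ` X)" using alg_indep_over_finite[OF ind] by simp
  have inj: "inj_on \<phi> X" using \<open>inj \<phi>\<close> by (rule inj_on_subset) simp
  fix D k' assume H: "(\<forall>e\<in>exponents (\<phi> ` X) D. k' e \<in> B) \<and>
    (\<Sum>e\<in>exponents (\<phi> ` X) D. k' e * monomial (\<phi> ` X) e) = 0"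
  have bij: "bij_betw (exponent_pullback \<phi> X) (exponents (\<phi> ` X) D) (exponents X D)"
    by (rule bij_betw_exponent_pullback[OF inj])
  define push where "push = inv_into (exponents (\<phi> ` X) D) (exponent_pullback \<phi> X)"
  define k where "k e = inv_into A \<phi> (k' (push e))" for e
  have k: "k e \<in> A" "\<phi> (k e) = k' (push e)" if "e \<in> exponents X D" for e
  proof -
    have "push e \<in> exponents (\<phi> ` X) D"
      unfolding push_def using bij that by (metis bij_betw_def inv_into_into)
    then have "k' (push e) \<in> \<phi> ` A" using H BA by blast
    then show "k e \<in> A" "\<phi> (k e) = k' (push e)" unfolding k_def by (auto intro: inv_into_into f_inv_into_f)
  qed
  have push_pullback: "push (exponent_pullback \<phi> X e) = e" if "e \<in> exponents (\<phi> ` X) D" for e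
    unfolding push_def using bij that by (simp add: bij_betw_def)
  have "\<phi> (\<Sum>e\<in>exponents X D. k e * monomial X e)
      = (\<Sum>e\<in>exponents (\<phi> ` X) D. k' e * monomial (\<phi> ` X) e)"
    unfolding ring_hom_poly[OF hom inj] using bij_betwE[OF bij] k(2) push_pullback
    by (intro sum.cong) auto
  then have sum0: "(\<Sum>e\<in>exponents X D. k e * monomial X e) = 0"
    using H \<open>inj \<phi>\<close> ring_hom_zero[OF hom] by (metis injD)
  have k0: "k e = 0" if "e \<in> exponents X D" for e
    by (rule alg_indep_overD[OF ind _ sum0 that]) (use k(1) in blast)
  show "\<forall>e\<in>exponents (\<phi> ` X) D. k' e = 0"
  proof
    fix e assume e: "e \<in> exponents (\<phi> ` X) D"
    then have "exponent_pullback \<phi> X e \<in> exponents X D" using bij_betwE[OF bij] by blast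
    from k(2)[OF this] k0[OF this] have "k' (push (exponent_pullback \<phi> X e)) = 0"
      by (simp add: ring_hom_zero[OF hom])
    then show "k' e = 0" using push_pullback[OF e] by simp
  qed
qed

section \<open>Algebraic dependence and elements killed by a homomorphism\<close>

definition poly_algebraic :: "'a::comm_ring_1 set \<Rightarrow> 'a set \<Rightarrow> 'a \<Rightarrow> bool" where
  "poly_algebraic C Y g \<longleftrightarrow> (\<exists>n \<delta> a. n \<ge> 1 \<and> (\<forall>j\<le>n. a j \<in> lin_span C (monomials Y \<delta>)) \<and>
     a n \<noteq> 0 \<and> (\<Sum>j\<le>n. a j * g ^ j) = 0)"

lemma poly_algebraic_mono:
  assumes "poly_algebraic C Y g" "finite Y'" "Y \<subseteq> Y'"
  shows "poly_algebraic C Y' g"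
  using assms(1) lin_span_mono[OF monomials_subset[OF assms(2,3)]]
  unfolding poly_algebraic_def by blast

lemma poly_algebraic_member:
  assumes C: "is_subring C" and "finite Y" "g \<in> Y"
  shows "poly_algebraic C Y g"
proof -
  define a where "a j = (if j = 0 then - g else 1)" for j :: nat
  have "g \<in> lin_span C (monomials Y 1)" "1 \<in> lin_span C (monomials Y 1)"
    using lin_span_superset[OF C] var_in_monomials[OF assms(2,3)] one_in_monomials by blast+
  then have "a j \<in> lin_span C (monomials Y 1)" for j
    unfolding a_def using lin_span_uminus[OF C] by simp
  moreover have "(\<Sum>j\<le>1. a j * g ^ j) = 0" "a 1 \<noteq> 0" unfolding a_def by simp_all
  ultimately show ?thesis unfolding poly_algebraic_def by (intro exI[of _ 1] exI[of _ 1] exI[of _ a]) auto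
qed

lemma poly_relation_top_coeff:
  fixes A :: "nat \<Rightarrow> 'a::comm_ring_1"
  assumes rel: "(\<Sum>j\<le>D. A j * g ^ j) = 0" and nz: "\<exists>j\<le>D. A j \<noteq> 0"
  obtains n where "1 \<le> n" "n \<le> D" "A n \<noteq> 0" "(\<Sum>j\<le>n. A j * g ^ j) = 0"
proof -
  define n where "n = Max {j. j \<le> D \<and> A j \<noteq> 0}"
  have fin: "finite {j. j \<le> D \<and> A j \<noteq> 0}" by simp
  have "{j. j \<le> D \<and> A j \<noteq> 0} \<noteq> {}" using nz by blast
  then have "n \<in> {j. j \<le> D \<and> A j \<noteq> 0}" unfolding n_def by (rule Max_in[OF fin])
  then have n: "n \<le> D" "A n \<noteq> 0" by simp_all
  have "A j = 0" if "n < j" "j \<le> D" for j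
  proof (rule ccontr)
    assume "A j \<noteq> 0"
    then have "j \<le> n" unfolding n_def using that(2) by (intro Max_ge[OF fin]) simp
    with that(1) show False by simp
  qed
  then have "(\<Sum>j\<le>n. A j * g ^ j) = (\<Sum>j\<le>D. A j * g ^ j)"
    using n by (intro sum.mono_neutral_left) auto
  then have "(\<Sum>j\<le>n. A j * g ^ j) = 0" using rel by simp
  moreover have "n \<noteq> 0" using calculation n by (intro notI) simp
  ultimately show thesis using that n by (simp add: Suc_le_eq)
qed

lemma poly_algebraic_if_dependent_insert:
  assumes C: "is_subring C" and ind: "alg_indep_over C X" and gX: "g \<notin> X"
    and dep: "\<not> alg_indep_over C (insert g X)"
  shows "poly_algebraic C X g"
proof -
  have fin: "finite X" using ind by (rule alg_indep_over_finite)
  obtain D k where kC: "\<forall>e\<in>exponents (insert g X) D. k e \<in> C"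
    and rel: "(\<Sum>e\<in>exponents (insert g X) D. k e * monomial (insert g X) e) = 0"
    and nz: "\<exists>e\<in>exponents (insert g X) D. k e \<noteq> 0"
    using dep fin unfolding alg_indep_over_def by blast
  define A where "A j = (\<Sum>e\<in>exponents X D. k (e(g := j)) * monomial X e)" for j
  have kC': "\<forall>e\<in>exponents X D. k (e(g := j)) \<in> C" if "j \<le> D" for j
  proof
    fix e assume "e \<in> exponents X D"
    from exponents_upd[OF this that] show "k (e(g := j)) \<in> C" using kC by blast
  qed
  have A: "A j \<in> lin_span C (monomials X D)" if "j \<le> D" for j
    unfolding A_def monomials_def using kC'[OF that] by (intro lin_span_sum lin_span.base) auto
  have "(\<Sum>j\<le>D. A j * g ^ j) = 0"
    using rel unfolding sum_exponents_insert_slices[OF gX fin] A_def by (simp add: mult.commute)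
  moreover have "\<exists>j\<le>D. A j \<noteq> 0"
  proof -
    obtain j e where j: "j \<le> D" "e \<in> exponents X D" "k (e(g := j)) \<noteq> 0"
      using nz by (auto elim: exponents_insertE)
    have "A j \<noteq> 0"
    proof
      assume "A j = 0"
      then have "k (e(g := j)) = 0"
        using alg_indep_overD[OF ind kC'[OF j(1)] _ j(2)] unfolding A_def by simp
      with j(3) show False by simp
    qed
    then show ?thesis using j(1) by blast
  qed
  ultimately obtain n where "1 \<le> n" "n \<le> D" "A n \<noteq> 0" "(\<Sum>j\<le>n. A j * g ^ j) = 0"
    by (rule poly_relation_top_coeff)
  then show ?thesis
    unfolding poly_algebraic_def using A by (intro exI[of _ n] exI[of _ D] exI[of _ A]) auto
qed

text \<open>Cancelling powers of \<open>p\<close> in a domain, a relation \<open>\<Sum> p\<^sup>j A\<^sub>j = 0\<close> with \<open>\<phi> p = 0\<close>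
  yields \<open>\<phi> A\<^sub>j = 0\<close> for the lowest nonzero \<open>A\<^sub>j\<close>.\<close>

lemma powers_relation_kernel:
  fixes p :: "'a::idom" and \<phi> :: "'a \<Rightarrow> 'b::comm_ring_1"
  assumes hom: "ring_hom \<phi>" and p: "p \<noteq> 0" "\<phi> p = 0"
    and rel: "(\<Sum>j\<le>D. p ^ j * A j) = 0"
    and faithful: "\<And>j. j \<le> D \<Longrightarrow> \<phi> (A j) = 0 \<Longrightarrow> A j = 0"
  shows "j \<le> D \<Longrightarrow> A j = 0"
proof (induction j rule: less_induct)
  case (less j)
  have "{..D} = {..<j} \<union> {j..D}" using less.prems by auto
  then have "(\<Sum>i\<le>D. p ^ i * A i) = (\<Sum>i<j. p ^ i * A i) + (\<Sum>i\<in>{j..D}. p ^ i * A i)"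
    by (simp only:) (rule sum.union_disjoint, auto)
  also have "(\<Sum>i<j. p ^ i * A i) = 0" using less.IH less.prems by simp
  also have "(\<Sum>i\<in>{j..D}. p ^ i * A i) = p ^ j * (\<Sum>i\<in>{j..D}. p ^ (i - j) * A i)"
    unfolding sum_distrib_left by (intro sum.cong refl) (simp flip: power_add mult.assoc)
  finally have "(\<Sum>i\<in>{j..D}. p ^ (i - j) * A i) = 0" using rel p(1) by simp
  then have "0 = \<phi> (\<Sum>i\<in>{j..D}. p ^ (i - j) * A i)" by (simp add: ring_hom_zero[OF hom])
  also have "\<dots> = (\<Sum>i\<in>{j..D}. \<phi> p ^ (i - j) * \<phi> (A i))"
    by (simp add: ring_hom_sum[OF hom] ring_hom_mult[OF hom] ring_hom_power[OF hom])
  also have "\<dots> = \<phi> (A j) + (\<Sum>i\<in>{Suc j..D}. \<phi> p ^ (i - j) * \<phi> (A i))"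
    using less.prems by (simp add: sum.atLeast_Suc_atMost)
  also have "(\<Sum>i\<in>{Suc j..D}. \<phi> p ^ (i - j) * \<phi> (A i)) = 0"
    using p(2) by (intro sum.neutral) (auto simp: power_0_left)
  finally show ?case using faithful less.prems by simp
qed

lemma alg_indep_over_insert_kernel:
  fixes \<phi> :: "'a::idom \<Rightarrow> 'b::comm_ring_1"
  assumes hom: "ring_hom \<phi>" and inj: "inj_on \<phi> X" and ind: "alg_indep_over B (\<phi> ` X)"
    and KB: "\<phi> ` K \<subseteq> B" and ker: "\<forall>a\<in>K. \<phi> a = 0 \<longrightarrow> a = 0" and "finite X"
    and pX: "p \<notin> X" and p: "p \<noteq> 0" "\<phi> p = 0"
  shows "alg_indep_over K (insert p X)"
  unfolding alg_indep_over_def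
proof (intro conjI allI impI)
  show "finite (insert p X)" using \<open>finite X\<close> by simp
  fix D k assume H: "(\<forall>e\<in>exponents (insert p X) D. k e \<in> K) \<and>
    (\<Sum>e\<in>exponents (insert p X) D. k e * monomial (insert p X) e) = 0"
  define A where "A j = (\<Sum>e\<in>exponents X D. k (e(p := j)) * monomial X e)" for j
  have kK: "\<forall>e\<in>exponents X D. k (e(p := j)) \<in> K" if "j \<le> D" for j
  proof
    fix e assume "e \<in> exponents X D"
    from exponents_upd[OF this that] show "k (e(p := j)) \<in> K" using H by blast
  qed
  have coeffs_zero: "\<forall>e\<in>exponents X D. k (e(p := j)) = 0" if "j \<le> D" "\<phi> (A j) = 0" for j
    using coeffs_zero_if_ring_hom_kills_poly[OF hom inj ind kK[OF that(1)] KB ker] that(2)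
    unfolding A_def by blast
  have rel: "(\<Sum>j\<le>D. p ^ j * A j) = 0"
    using H unfolding sum_exponents_insert_slices[OF pX \<open>finite X\<close>] A_def by simp
  have "A j = 0" if "j \<le> D" for j
  proof (rule powers_relation_kernel[OF hom p rel _ that])
    fix i assume "i \<le> D" "\<phi> (A i) = 0"
    with coeffs_zero show "A i = 0" unfolding A_def by simp
  qed
  then have zero: "\<forall>e\<in>exponents X D. k (e(p := j)) = 0" if "j \<le> D" for j
    using coeffs_zero that by (simp add: ring_hom_zero[OF hom])
  show "\<forall>e\<in>exponents (insert p X) D. k e = 0"
  proof
    fix e assume "e \<in> exponents (insert p X) D"
    then obtain j e' where "j \<le> D" "e' \<in> exponents X D" "e = e'(p := j)"
      by (rule exponents_insertE)
    with zero show "k e = 0" by blast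
  qed
qed

section \<open>Generated subrings and polynomials of bounded degree\<close>

lemma ring_gen_subring: "is_subring (ring_gen A)"
  unfolding ring_gen_def is_subring_def by blast

lemma ring_gen_least: "is_subring S \<Longrightarrow> A \<subseteq> S \<Longrightarrow> ring_gen A \<subseteq> S"
  unfolding ring_gen_def by blast

lemma ring_gen_superset: "A \<subseteq> ring_gen A"
  unfolding ring_gen_def by blast

lemma ring_gen_mono: "A \<subseteq> B \<Longrightarrow> ring_gen A \<subseteq> ring_gen B"
  using ring_gen_superset[of B] by (intro ring_gen_least[OF ring_gen_subring]) blast

lemma ring_hom_image_ring_gen:
  assumes "ring_hom \<phi>"
  shows "\<phi> ` ring_gen A \<subseteq> ring_gen (\<phi> ` A)"
proof -
  have "is_subring (\<phi> -` ring_gen (\<phi> ` A))" by (rule subring_vimage[OF assms ring_gen_subring])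
  moreover have "A \<subseteq> \<phi> -` ring_gen (\<phi> ` A)" using ring_gen_superset by blast
  ultimately have "ring_gen A \<subseteq> \<phi> -` ring_gen (\<phi> ` A)" by (rule ring_gen_least)
  then show ?thesis by blast
qed

definition polys_deg :: "'a::comm_ring_1 set \<Rightarrow> 'a set \<Rightarrow> nat \<Rightarrow> 'a set" where
  "polys_deg C Y t = lin_span C (\<Union>k\<le>t. Y ^ k)"

definition polys :: "'a::comm_ring_1 set \<Rightarrow> 'a set \<Rightarrow> 'a set" where
  "polys C Y = (\<Union>t. polys_deg C Y t)"

definition poly_fracs :: "'f::field set \<Rightarrow> 'f set \<Rightarrow> 'f set" where
  "poly_fracs C Y = {p / q | p q. p \<in> polys C Y \<and> q \<in> polys C Y \<and> q \<noteq> 0}"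

lemma polys_deg_mono: "t \<le> t' \<Longrightarrow> polys_deg C Y t \<subseteq> polys_deg C Y t'"
  unfolding polys_deg_def by (intro lin_span_mono UN_mono) auto

lemma polys_deg_mult:
  assumes "is_subring C" "x \<in> polys_deg C Y i" "y \<in> polys_deg C Y j"
  shows "x * y \<in> polys_deg C Y (i + j)"
proof -
  have sub: "(\<Union>k\<le>i. Y ^ k) * (\<Union>k\<le>j. Y ^ k) \<subseteq> (\<Union>k\<le>i + j. Y ^ k)"
  proof
    fix m assume "m \<in> (\<Union>k\<le>i. Y ^ k) * (\<Union>k\<le>j. Y ^ k)"
    then obtain a b where m: "m = a * b" "a \<in> (\<Union>k\<le>i. Y ^ k)" "b \<in> (\<Union>k\<le>j. Y ^ k)"
      by (rule set_times_elim)
    then obtain k1 k2 where k: "k1 \<le> i" "k2 \<le> j" "a \<in> Y ^ k1" "b \<in> Y ^ k2" by blast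
    have "m \<in> Y ^ (k1 + k2)" unfolding m(1) power_add by (rule set_times_intro[OF k(3,4)])
    moreover have "k1 + k2 \<le> i + j" using k(1,2) by simp
    ultimately show "m \<in> (\<Union>k\<le>i + j. Y ^ k)" by blast
  qed
  have "x * y \<in> lin_span C ((\<Union>k\<le>i. Y ^ k) * (\<Union>k\<le>j. Y ^ k))"
    using lin_span_mult[OF assms(1) assms(2,3)[unfolded polys_deg_def]] .
  then show ?thesis unfolding polys_deg_def using lin_span_mono[OF sub] by blast
qed

lemma const_in_polys_deg:
  assumes "is_subring C" "c \<in> C"
  shows "c \<in> polys_deg C Y t"
proof -
  have "(1::'a) \<in> (\<Union>k\<le>t. Y ^ k)" by (rule UN_I[of 0]) simp_all
  from lin_span.base[OF assms(2) this] show ?thesis unfolding polys_deg_def by simp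
qed

lemma var_in_polys_deg:
  assumes "is_subring C" "y \<in> Y"
  shows "y \<in> polys_deg C Y 1"
proof -
  have "y \<in> Y ^ 1" using assms(2) by (subst power_one_right)
  then have "y \<in> (\<Union>k\<le>1. Y ^ k)" using UN_I[of "1::nat" "{..1}" y "\<lambda>k. Y ^ k"] by simp
  then show ?thesis unfolding polys_deg_def by (rule subsetD[OF lin_span_superset[OF assms(1)]])
qed

lemma power_in_polys_deg:
  assumes "is_subring C" "x \<in> polys_deg C Y d"
  shows "x ^ m \<in> polys_deg C Y (d * m)"
proof (induction m)
  case 0
  then show ?case using const_in_polys_deg[OF assms(1) subring_one[OF assms(1)]] by simp
next
  case (Suc m)
  then show ?case using polys_deg_mult[OF assms Suc.IH] by simp
qed

lemma prod_power_in_polys_deg: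
  assumes C: "is_subring C" and "finite Z" and "\<forall>z\<in>Z. p z \<in> polys_deg C Y d"
  shows "(\<Prod>z\<in>Z. p z ^ e z) \<in> polys_deg C Y (d * (\<Sum>z\<in>Z. e z))"
  using assms(2,3)
proof (induction Z rule: finite_induct)
  case empty
  then show ?case by (simp add: const_in_polys_deg[OF C subring_one[OF C]])
next
  case (insert z Z)
  then have "p z ^ e z * (\<Prod>z\<in>Z. p z ^ e z) \<in> polys_deg C Y (d * e z + d * (\<Sum>z\<in>Z. e z))"
    by (intro polys_deg_mult[OF C] power_in_polys_deg[OF C]) auto
  then show ?case using insert by (simp add: distrib_left)
qed

lemma polys_deg_subset_polys: "polys_deg C Y t \<subseteq> polys C Y"
  unfolding polys_def by (rule UN_upper[OF UNIV_I])

lemma polys_subring: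
  assumes C: "is_subring C"
  shows "is_subring (polys C Y)"
  unfolding is_subring_def
proof (intro conjI ballI)
  show "0 \<in> polys C Y" "1 \<in> polys C Y"
    using polys_deg_subset_polys const_in_polys_deg[OF C] subring_zero[OF C] subring_one[OF C]
    by (meson subsetD)+
  fix x y assume "x \<in> polys C Y" "y \<in> polys C Y"
  then obtain i j where "x \<in> polys_deg C Y i" "y \<in> polys_deg C Y j" unfolding polys_def by blast
  then have xy: "x \<in> polys_deg C Y (i + j)" "y \<in> polys_deg C Y (i + j)"
    using polys_deg_mono[of i "i + j" C Y] polys_deg_mono[of j "i + j" C Y] by auto
  have "x + y \<in> polys_deg C Y (i + j)" "- x \<in> polys_deg C Y (i + j)"
    using lin_span.add lin_span_uminus[OF C] xy unfolding polys_deg_def by auto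
  moreover have "x * y \<in> polys_deg C Y (i + j + (i + j))" using polys_deg_mult[OF C xy] .
  ultimately show "x + y \<in> polys C Y" "x * y \<in> polys C Y" "- x \<in> polys C Y"
    using polys_deg_subset_polys by (meson subsetD)+
qed

lemma ring_gen_subset_polys:
  assumes C: "is_subring C"
  shows "ring_gen (C \<union> Y) \<subseteq> polys C Y"
proof (rule ring_gen_least[OF polys_subring[OF C]], rule subsetI)
  fix x assume "x \<in> C \<union> Y"
  then have "x \<in> polys_deg C Y 1" using const_in_polys_deg[OF C] var_in_polys_deg[OF C] by auto
  then show "x \<in> polys C Y" using polys_deg_subset_polys by (rule subsetD[rotated])
qed

lemma poly_fracs_common_denom:
  fixes C :: "'f::field set"
  assumes C: "is_subring C" and "finite Z"
  shows "Z \<subseteq> poly_fracs C Y \<Longrightarrow>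
    \<exists>d q p. q \<in> polys_deg C Y d \<and> q \<noteq> 0 \<and> (\<forall>z\<in>Z. p z \<in> polys_deg C Y d \<and> z * q = p z)"
  using \<open>finite Z\<close>
proof (induction Z rule: finite_induct)
  case empty
  then show ?case using const_in_polys_deg[OF C subring_one[OF C]] by (intro exI[of _ 0] exI[of _ 1]) auto
next
  case (insert z Z)
  then obtain d q p where dqp: "q \<in> polys_deg C Y d" "q \<noteq> 0"
    "\<forall>w\<in>Z. p w \<in> polys_deg C Y d \<and> w * q = p w" by auto
  obtain p0 q0 t1 t2 where "p0 \<in> polys_deg C Y t1" "q0 \<in> polys_deg C Y t2" "q0 \<noteq> 0" "z = p0 / q0"
    using insert.prems unfolding poly_fracs_def polys_def by auto
  then have pq0: "p0 \<in> polys_deg C Y (t1 + t2)" "q0 \<in> polys_deg C Y (t1 + t2)" "z * q0 = p0" "q0 \<noteq> 0"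
    using polys_deg_mono[of t1 "t1 + t2" C Y] polys_deg_mono[of t2 "t1 + t2" C Y] by auto
  define p' where "p' w = (if w = z then p0 * q else p w * q0)" for w
  have "q * q0 \<in> polys_deg C Y (d + (t1 + t2))" "q * q0 \<noteq> 0"
    using polys_deg_mult[OF C dqp(1) pq0(2)] dqp(2) pq0(4) by auto
  moreover have "p' w \<in> polys_deg C Y (d + (t1 + t2)) \<and> w * (q * q0) = p' w"
    if "w \<in> insert z Z" for w
  proof (cases "w = z")
    case True
    then show ?thesis
      using polys_deg_mult[OF C pq0(1) dqp(1)] pq0(3) unfolding p'_def by (simp add: ac_simps)
  next
    case False
    then have "p w \<in> polys_deg C Y d" "w * q = p w" using that dqp(3) by auto
    then show ?thesis
      using polys_deg_mult[OF C _ pq0(2), of "p w" d] False unfolding p'_def by (simp add: mult.assoc)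
  qed
  ultimately show ?case by blast
qed

section \<open>Independent elements of a finite algebraic extension\<close>

lemma counting_ineq:
  fixes x N r s :: nat
  assumes "r < s"
  shows "(x * (N * (x + 1) ^ r) + 1) ^ r * N < (N * (x + 1) ^ r + 1) ^ s"
proof -
  define D where "D = N * (x + 1) ^ r"
  have "x * D + 1 \<le> (x + 1) * (D + 1)" by (simp add: algebra_simps)
  then have "(x * D + 1) ^ r * N \<le> ((x + 1) * (D + 1)) ^ r * N"
    by (intro mult_le_mono1 power_mono) auto
  also have "\<dots> = D * (D + 1) ^ r" unfolding D_def power_mult_distrib by (simp add: ac_simps)
  also have "\<dots> < (D + 1) ^ Suc r" by simp
  also have "\<dots> \<le> (D + 1) ^ s" using assms by (intro power_increasing) auto
  finally show ?thesis unfolding D_def .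
qed

locale algebraic_generators =
  fixes F :: "'f::field set" and X G :: "'f set" and n :: "'f \<Rightarrow> nat"
    and a :: "'f \<Rightarrow> nat \<Rightarrow> 'f" and \<delta> :: nat
  assumes subfield: "is_subfield F" and finite_X: "finite X" and finite_G: "finite G"
    and deg_pos: "\<And>g. g \<in> G \<Longrightarrow> n g \<ge> 1"
    and coeff_span: "\<And>g j. g \<in> G \<Longrightarrow> j \<le> n g \<Longrightarrow> a g j \<in> lin_span F (monomials X \<delta>)"
    and lead_nonzero: "\<And>g. g \<in> G \<Longrightarrow> a g (n g) \<noteq> 0"
    and relation: "\<And>g. g \<in> G \<Longrightarrow> (\<Sum>j\<le>n g. a g j * g ^ j) = 0"
begin

lemma subring: "is_subring F"
  using subfield by (rule subfield_subring)

definition lead_prod :: 'f where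
  "lead_prod = (\<Prod>g\<in>G. a g (n g))"

definition reduced :: "'f set" where
  "reduced = (\<lambda>f. \<Prod>g\<in>G. g ^ f g) ` PiE G (\<lambda>g. {..<n g})"

definition reduced_span :: "nat \<Rightarrow> 'f set" where
  "reduced_span b = lin_span F (monomials X b * reduced)"

definition deg_step :: nat where
  "deg_step = card G * \<delta> + \<delta> + 1"

lemma lead_prod_nonzero: "lead_prod \<noteq> 0"
  unfolding lead_prod_def using lead_nonzero finite_G by simp

lemma prod_lead_coeffs_in_span:
  assumes "G' \<subseteq> G"
  shows "(\<Prod>g\<in>G'. a g (n g)) \<in> lin_span F (monomials X (card G' * \<delta>))"
proof -
  have "finite G'" using finite_G assms by (rule finite_subset[rotated])
  then show ?thesis using assms
  proof (induction G' rule: finite_induct)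
    case empty
    then show ?case using lin_span_superset[OF subring] one_in_monomials by fastforce
  next
    case (insert g G')
    then have "a g (n g) * (\<Prod>g\<in>G'. a g (n g)) \<in> lin_span F (monomials X (\<delta> + card G' * \<delta>))"
      using coeff_span by (intro lin_span_monomials_mult[OF subring]) auto
    then show ?case using insert by simp
  qed
qed

lemma reduced_span_mono: "b \<le> b' \<Longrightarrow> reduced_span b \<subseteq> reduced_span b'"
  unfolding reduced_span_def by (intro lin_span_mono set_times_mono2 monomials_mono order_refl)

lemma span_monomials_times_reduced_span:
  assumes "x \<in> lin_span F (monomials X c)" "u \<in> reduced_span b"
  shows "x * u \<in> reduced_span (c + b)"
proof -
  have "x * u \<in> lin_span F (monomials X c * (monomials X b * reduced))"
    using lin_span_mult[OF subring assms(1) assms(2)[unfolded reduced_span_def]] .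
  moreover have "monomials X c * (monomials X b * reduced) \<subseteq> monomials X (c + b) * reduced"
    unfolding mult.assoc[symmetric] by (intro set_times_mono2 monomials_mult order_refl)
  ultimately show ?thesis unfolding reduced_span_def by (rule subsetD[OF lin_span_mono, rotated])
qed

lemma monomial_times_reduced_in_span: "m \<in> monomials X b \<Longrightarrow> r \<in> reduced \<Longrightarrow> m * r \<in> reduced_span b"
  unfolding reduced_span_def by (rule subsetD[OF lin_span_superset[OF subring] set_times_intro])

lemma one_in_reduced: "1 \<in> reduced"
proof -
  have "restrict (\<lambda>_. 0) G \<in> PiE G (\<lambda>g. {..<n g})" using deg_pos by (auto simp: Suc_le_eq)
  moreover have "1 = (\<Prod>g\<in>G. g ^ restrict (\<lambda>_. 0::nat) G g)" by simp
  ultimately show ?thesis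
    unfolding reduced_def by (rule image_eqI[where f = "\<lambda>f. \<Prod>g\<in>G. g ^ f g", rotated])
qed

lemma lead_prod_in_span: "lead_prod \<in> lin_span F (monomials X (card G * \<delta>))"
  unfolding lead_prod_def by (rule prod_lead_coeffs_in_span) simp

lemma lead_prod_times:
  assumes "u \<in> reduced_span b"
  shows "lead_prod * u \<in> reduced_span (b + deg_step)"
proof -
  have "lead_prod * u \<in> reduced_span (card G * \<delta> + b)"
    by (rule span_monomials_times_reduced_span[OF lead_prod_in_span assms])
  then show ?thesis by (rule subsetD[OF reduced_span_mono, rotated]) (simp add: deg_step_def)
qed

lemma lead_prod_power_times:
  assumes "u \<in> reduced_span b"
  shows "lead_prod ^ i * u \<in> reduced_span (b + i * deg_step)"
proof (induction i)
  case 0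
  then show ?case using assms by simp
next
  case (Suc i)
  from lead_prod_times[OF Suc.IH] show ?case by (simp add: ac_simps)
qed

lemma reduced_split:
  assumes "r \<in> reduced" "g \<in> G"
  obtains i r' where "i < n g" "r = g ^ i * r'" "\<And>j. j < n g \<Longrightarrow> g ^ j * r' \<in> reduced"
proof -
  obtain f where f: "f \<in> PiE G (\<lambda>g. {..<n g})" "r = (\<Prod>g\<in>G. g ^ f g)"
    using assms(1) unfolding reduced_def by auto
  define r' where "r' = (\<Prod>g'\<in>G - {g}. g' ^ f g')"
  have split: "(\<Prod>g'\<in>G. g' ^ h g') = g ^ h g * (\<Prod>g'\<in>G - {g}. g' ^ h g')" for h
    using assms(2) finite_G by (simp add: prod.remove)
  have "g ^ j * r' \<in> reduced" if "j < n g" for j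
  proof -
    have "f(g := j) \<in> PiE G (\<lambda>g. {..<n g})"
      using f(1) that assms(2) by (auto simp: PiE_def Pi_def extensional_def)
    moreover have "(\<Prod>g'\<in>G - {g}. g' ^ (f(g := j)) g') = r'"
      unfolding r'_def by (intro prod.cong) auto
    then have "g ^ j * r' = (\<Prod>g'\<in>G. g' ^ (f(g := j)) g')" by (simp add: split)
    ultimately show ?thesis
      unfolding reduced_def by (rule image_eqI[where f = "\<lambda>f. \<Prod>g\<in>G. g ^ f g", rotated])
  qed
  moreover have "f g < n g" "r = g ^ f g * r'"
    using f assms(2) split[of f] unfolding r'_def by auto
  ultimately show thesis using that by blast
qed

text \<open>The defining relation of \<open>g\<close> rewrites \<open>a g (n g) * g ^ n g\<close> in lower powers of \<open>g\<close>.\<close>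

lemma lead_times_top_power:
  assumes g: "g \<in> G" and m: "m \<in> monomials X b" and r': "\<And>j. j < n g \<Longrightarrow> g ^ j * r' \<in> reduced"
  shows "a g (n g) * (m * (g ^ n g * r')) \<in> reduced_span (\<delta> + b)"
proof -
  have "(\<Sum>j<n g. a g j * g ^ j) + a g (n g) * g ^ n g = 0"
    using relation[OF g] by (simp add: lessThan_Suc_atMost[symmetric])
  then have "a g (n g) * g ^ n g = - (\<Sum>j<n g. a g j * g ^ j)"
    by (simp add: eq_neg_iff_add_eq_0 add.commute)
  then have "a g (n g) * (m * (g ^ n g * r')) = - (\<Sum>j<n g. a g j * g ^ j) * (m * r')"
    by (metis mult.assoc mult.left_commute)
  also have "\<dots> = - (\<Sum>j<n g. a g j * (m * (g ^ j * r')))"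
    by (simp add: sum_distrib_left sum_distrib_right ac_simps)
  finally have eq: "a g (n g) * (m * (g ^ n g * r')) = - (\<Sum>j<n g. a g j * (m * (g ^ j * r')))" .
  have "a g j * (m * (g ^ j * r')) \<in> reduced_span (\<delta> + b)" if "j < n g" for j
    using span_monomials_times_reduced_span[OF coeff_span[OF g less_imp_le[OF that]]
        monomial_times_reduced_in_span[OF m r'[OF that]]] .
  then have "(\<Sum>j<n g. a g j * (m * (g ^ j * r'))) \<in> reduced_span (\<delta> + b)"
    unfolding reduced_span_def by (intro lin_span_sum) simp
  then show ?thesis unfolding eq reduced_span_def by (rule lin_span_uminus[OF subring])
qed

lemma lead_prod_times_gen_reduced:
  assumes g: "g \<in> G" and m: "m \<in> monomials X b" and r: "r \<in> reduced"
  shows "lead_prod * (m * (g * r)) \<in> reduced_span (b + deg_step)"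
proof -
  obtain i r' where i: "i < n g" "r = g ^ i * r'" and r': "\<And>j. j < n g \<Longrightarrow> g ^ j * r' \<in> reduced"
    using reduced_split[OF r g] by metis
  have gr: "g * r = g ^ Suc i * r'" using i(2) by simp
  show ?thesis
  proof (cases "Suc i < n g")
    case True
    then have "m * (g * r) \<in> reduced_span b"
      unfolding gr by (intro monomial_times_reduced_in_span[OF m r'])
    then show ?thesis by (rule lead_prod_times)
  next
    case False
    then have top: "Suc i = n g" using i(1) by simp
    define rest where "rest = (\<Prod>g'\<in>G - {g}. a g' (n g'))"
    have lead: "lead_prod = a g (n g) * rest"
      unfolding lead_prod_def rest_def using g finite_G by (simp add: prod.remove)
    have "rest \<in> lin_span F (monomials X (card (G - {g}) * \<delta>))"
      unfolding rest_def by (rule prod_lead_coeffs_in_span) auto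
    moreover have "card (G - {g}) * \<delta> \<le> card G * \<delta>"
      using finite_G by (simp add: card_mono)
    ultimately have "rest \<in> lin_span F (monomials X (card G * \<delta>))"
      using lin_span_mono[OF monomials_mono] by blast
    from span_monomials_times_reduced_span[OF this lead_times_top_power[OF g m r']]
    have "lead_prod * (m * (g * r)) \<in> reduced_span (card G * \<delta> + (\<delta> + b))"
      unfolding lead gr top by (simp add: ac_simps)
    then show ?thesis by (rule subsetD[OF reduced_span_mono, rotated]) (simp add: deg_step_def)
  qed
qed

lemma lead_prod_times_gen:
  assumes g: "g \<in> G" and u: "u \<in> reduced_span b"
  shows "lead_prod * (g * u) \<in> reduced_span (b + deg_step)"
  using u unfolding reduced_span_def[of b]
proof induction
  case zero
  then show ?case unfolding reduced_span_def by (simp add: lin_span.zero)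
next
  case (base c v)
  then obtain m r where mr: "m \<in> monomials X b" "r \<in> reduced" "v = m * r"
    by (auto elim: set_times_elim)
  from lead_prod_times_gen_reduced[OF g mr(1,2)]
  have "c * (lead_prod * (m * (g * r))) \<in> reduced_span (b + deg_step)"
    unfolding reduced_span_def by (rule lin_span_smult[OF subring base(1)])
  then show ?case using mr(3) by (simp add: ac_simps)
next
  case (add x y)
  then show ?case unfolding reduced_span_def by (simp add: distrib_left lin_span.add)
qed

lemma lead_prod_times_var:
  assumes x: "x \<in> X" and u: "u \<in> reduced_span b"
  shows "lead_prod * (x * u) \<in> reduced_span (b + deg_step)"
proof -
  have "x \<in> lin_span F (monomials X 1)"
    using lin_span_superset[OF subring] var_in_monomials[OF finite_X x] by blast
  from span_monomials_times_reduced_span[OF lead_prod_in_span span_monomials_times_reduced_span[OF this u]]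
  have "lead_prod * (x * u) \<in> reduced_span (card G * \<delta> + (1 + b))" .
  then show ?thesis by (rule subsetD[OF reduced_span_mono, rotated]) (simp add: deg_step_def)
qed

lemma lead_prod_power_times_monomial:
  "m \<in> (X \<union> G) ^ k \<Longrightarrow> lead_prod ^ k * m \<in> reduced_span (k * deg_step)"
proof (induction k arbitrary: m)
  case 0
  then show ?case using monomial_times_reduced_in_span[OF one_in_monomials one_in_reduced] by simp
next
  case (Suc k)
  from Suc.prems have "m \<in> (X \<union> G) * (X \<union> G) ^ k" by simp
  then obtain y m0 where y: "m = y * m0" "y \<in> X \<union> G" "m0 \<in> (X \<union> G) ^ k"
    by (rule set_times_elim)
  from Suc.IH[OF y(3)] have "lead_prod * (y * (lead_prod ^ k * m0)) \<in> reduced_span (k * deg_step + deg_step)"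
    using y(2) lead_prod_times_var lead_prod_times_gen by blast
  then show ?case using y(1) by (simp add: ac_simps)
qed

lemma lead_prod_power_times_poly:
  "x \<in> polys_deg F (X \<union> G) t \<Longrightarrow> lead_prod ^ t * x \<in> reduced_span (t * deg_step)"
  unfolding polys_deg_def
proof (induction rule: lin_span.induct)
  case zero
  then show ?case unfolding reduced_span_def by (simp add: lin_span.zero)
next
  case (base c m)
  then obtain k where k: "k \<le> t" "m \<in> (X \<union> G) ^ k" by blast
  from lead_prod_power_times[OF lead_prod_power_times_monomial[OF k(2)], of "t - k"]
  have "lead_prod ^ t * m \<in> reduced_span (t * deg_step)"
    using k(1) by (simp add: mult.assoc[symmetric] power_add[symmetric] add_mult_distrib[symmetric])
  then have "c * (lead_prod ^ t * m) \<in> reduced_span (t * deg_step)"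
    unfolding reduced_span_def by (rule lin_span_smult[OF subring base(1)])
  then show ?case by (simp add: ac_simps)
next
  case (add x y)
  then show ?case unfolding reduced_span_def by (simp add: distrib_left lin_span.add)
qed

lemma card_reduced_basis:
  "finite (monomials X b * reduced) \<and> card (monomials X b * reduced) \<le> (b + 1) ^ card X * (\<Prod>g\<in>G. n g)"
proof -
  have fin: "finite reduced" unfolding reduced_def using finite_G by (auto intro: finite_PiE)
  have "card reduced \<le> card (PiE G (\<lambda>g. {..<n g}))"
    unfolding reduced_def using finite_G by (intro card_image_le finite_PiE) auto
  also have "\<dots> = (\<Prod>g\<in>G. n g)" using finite_G by (simp add: card_PiE)
  finally have card_red: "card reduced \<le> (\<Prod>g\<in>G. n g)" .
  have "card (monomials X b * reduced) \<le> card (monomials X b \<times> reduced)"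
    unfolding set_times_image by (rule card_image_le) (simp add: finite_monomials[OF finite_X] fin)
  also have "\<dots> \<le> (b + 1) ^ card X * (\<Prod>g\<in>G. n g)"
    using card_monomials_le[OF finite_X] card_red by (simp add: card_cartesian_product mult_le_mono)
  finally show ?thesis
    using finite_monomials[OF finite_X] fin by (simp add: set_times_image)
qed

text \<open>Clearing the common denominator \<open>q\<close> of the elements of \<open>Z\<close> turns monomials in \<open>Z\<close> of
  total degree at most \<open>S\<close> into polynomials in \<open>X \<union> G\<close> of degree at most \<open>d S\<close>.\<close>

lemma cleared_monomial_in_reduced_span:
  assumes q: "q \<in> polys_deg F (X \<union> G) d" and p: "\<forall>z\<in>Z. p z \<in> polys_deg F (X \<union> G) d \<and> z * q = p z"
    and "finite Z" and e: "\<forall>z\<in>Z. e z \<le> D" and S: "card Z * D \<le> S"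
  shows "lead_prod ^ (d * S) * (q ^ S * monomial Z e) \<in> reduced_span (d * S * deg_step)"
proof -
  let ?E = "\<Sum>z\<in>Z. e z"
  have le: "?E \<le> S"
    using sum_bounded_above[of Z e D] e S by (simp add: order_trans)
  have "monomial Z e * q ^ ?E = (\<Prod>z\<in>Z. (z * q) ^ e z)"
    unfolding monomial_def power_sum by (simp add: prod.distrib[symmetric] power_mult_distrib)
  also have "\<dots> = (\<Prod>z\<in>Z. p z ^ e z)" using p by (intro prod.cong) auto
  finally have prod: "monomial Z e * q ^ ?E = (\<Prod>z\<in>Z. p z ^ e z)" .
  have "q ^ S = q ^ (S - ?E) * q ^ ?E" using le by (simp flip: power_add)
  then have "q ^ S * monomial Z e = q ^ (S - ?E) * (\<Prod>z\<in>Z. p z ^ e z)"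
    unfolding prod[symmetric] by (simp add: ac_simps)
  moreover have "q ^ (S - ?E) * (\<Prod>z\<in>Z. p z ^ e z) \<in> polys_deg F (X \<union> G) (d * (S - ?E) + d * ?E)"
    using p by (intro polys_deg_mult[OF subring] power_in_polys_deg[OF subring q]
        prod_power_in_polys_deg[OF subring \<open>finite Z\<close>]) auto
  moreover have "d * (S - ?E) + d * ?E = d * S" using le by (simp add: add_mult_distrib2[symmetric])
  ultimately show ?thesis using lead_prod_power_times_poly by simp
qed

theorem card_indep_le:
  assumes Z: "Z \<subseteq> poly_fracs F (X \<union> G)" and ind: "alg_indep_over F Z"
  shows "card Z \<le> card X"
proof (rule ccontr)
  assume "\<not> card Z \<le> card X"
  then have less: "card X < card Z" by simp
  have finZ: "finite Z" using ind by (rule alg_indep_over_finite)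
  obtain d q p where q: "q \<in> polys_deg F (X \<union> G) d" "q \<noteq> 0"
    and p: "\<forall>z\<in>Z. p z \<in> polys_deg F (X \<union> G) d \<and> z * q = p z"
    using poly_fracs_common_denom[OF subring finZ Z] by blast
  define x where "x = d * card Z * deg_step"
  define D where "D = (\<Prod>g\<in>G. n g) * (x + 1) ^ card X"
  define S where "S = card Z * D"
  define v where "v e = lead_prod ^ (d * S) * (q ^ S * monomial Z e)" for e
  define B where "B = monomials X (d * S * deg_step) * reduced"
  have span: "\<forall>e\<in>exponents Z D. v e \<in> lin_span F B"
    using cleared_monomial_in_reduced_span[OF q(1) p finZ, of _ D S]
    unfolding v_def B_def reduced_span_def S_def exponents_def by auto
  have finB: "finite B" using card_reduced_basis unfolding B_def by simp
  have card_less: "card B < card (exponents Z D)"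
  proof -
    have "card B \<le> (x * D + 1) ^ card X * (\<Prod>g\<in>G. n g)"
      using card_reduced_basis[of "d * S * deg_step"] unfolding B_def x_def S_def by (simp add: ac_simps)
    also have "\<dots> < (D + 1) ^ card Z" unfolding D_def by (rule counting_ineq[OF less])
    finally show ?thesis by (simp add: card_exponents[OF finZ])
  qed
  obtain k where k: "\<forall>e\<in>exponents Z D. k e \<in> F" "\<exists>e\<in>exponents Z D. k e \<noteq> 0"
    "(\<Sum>e\<in>exponents Z D. k e * v e) = 0"
    using lin_span_card_dependent[OF subfield finB finite_exponents[OF finZ] card_less span] by blast
  have "(\<Sum>e\<in>exponents Z D. k e * v e) = lead_prod ^ (d * S) * q ^ S * (\<Sum>e\<in>exponents Z D. k e * monomial Z e)"
    unfolding v_def by (simp add: sum_distrib_left ac_simps)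
  then have sum0: "(\<Sum>e\<in>exponents Z D. k e * monomial Z e) = 0"
    using k(3) lead_prod_nonzero q(2) by simp
  from k(2) obtain e where "e \<in> exponents Z D" "k e \<noteq> 0" by blast
  with alg_indep_overD[OF ind k(1) sum0] show False by simp
qed

end

lemma card_indep_le_if_poly_algebraic:
  fixes F :: "'f::field set"
  assumes F: "is_subfield F" and "finite Y" "finite G" and alg: "\<forall>g\<in>G. poly_algebraic F Y g"
    and Z: "Z \<subseteq> poly_fracs F (Y \<union> G)" and ind: "alg_indep_over F Z"
  shows "card Z \<le> card Y"
proof -
  obtain n \<delta> a where nda: "\<forall>g\<in>G. n g \<ge> 1 \<and> (\<forall>j\<le>n g. a g j \<in> lin_span F (monomials Y (\<delta> g))) \<and>
      a g (n g) \<noteq> 0 \<and> (\<Sum>j\<le>n g. a g j * g ^ j) = 0"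
    using alg unfolding poly_algebraic_def by metis
  have mono: "lin_span F (monomials Y (\<delta> g)) \<subseteq> lin_span F (monomials Y (\<Sum>g\<in>G. \<delta> g))" if "g \<in> G" for g
    using that \<open>finite G\<close> by (intro lin_span_mono monomials_mono member_le_sum) auto
  interpret algebraic_generators F Y G n a "\<Sum>g\<in>G. \<delta> g"
  proof
    fix g assume g: "g \<in> G"
    show "1 \<le> n g" "a g (n g) \<noteq> 0" "(\<Sum>j\<le>n g. a g j * g ^ j) = 0" using nda g by auto
    fix j assume "j \<le> n g"
    then show "a g j \<in> lin_span F (monomials Y (\<Sum>g\<in>G. \<delta> g))" using nda g mono[OF g] by blast
  qed (use assms in auto)
  show ?thesis using Z ind by (rule card_indep_le)
qed

section \<open>Algebraic rank inside a difference domain\<close>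

definition to_fract :: "'d::idom \<Rightarrow> 'd fract" where
  "to_fract x = Fract x 1"

lemma ring_hom_to_fract: "ring_hom to_fract"
  unfolding ring_hom_def to_fract_def by (simp add: One_fract_def)

lemma inj_to_fract: "inj to_fract"
  unfolding inj_def to_fract_def by (simp add: eq_fract)

lemma to_fract_eq_0_iff: "to_fract x = 0 \<longleftrightarrow> x = 0"
  unfolding to_fract_def by (simp add: Zero_fract_def eq_fract)

lemma Fract_eq_to_fract_divide: "b \<noteq> 0 \<Longrightarrow> Fract a b = to_fract a / to_fract b"
  unfolding to_fract_def by simp

locale difference_domain =
  fixes K :: "'d::idom set" and \<sigma> :: "'d \<Rightarrow> 'd"
  assumes K_field: "is_subfield K" and \<sigma>_endo: "ring_endo \<sigma>" and \<sigma>_K: "\<sigma> ` K \<subseteq> K"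
begin

definition K_fract :: "'d fract set" where
  "K_fract = to_fract ` K"

lemma K_subring: "is_subring K"
  using K_field by (rule subfield_subring)

lemma K_fract_subfield: "is_subfield K_fract"
  unfolding is_subfield_def is_subring_def K_fract_def
proof (intro conjI ballI impI)
  show "0 \<in> to_fract ` K" "1 \<in> to_fract ` K"
    using subring_zero[OF K_subring] subring_one[OF K_subring]
      ring_hom_zero[OF ring_hom_to_fract] ring_hom_one[OF ring_hom_to_fract] by (metis image_eqI)+
  fix x y assume "x \<in> to_fract ` K" "y \<in> to_fract ` K"
  then obtain x' y' where xy: "x' \<in> K" "y' \<in> K" "x = to_fract x'" "y = to_fract y'" by auto
  show "x + y \<in> to_fract ` K" "x * y \<in> to_fract ` K" "- x \<in> to_fract ` K"
    unfolding xy ring_hom_add[OF ring_hom_to_fract, symmetric] ring_hom_mult[OF ring_hom_to_fract, symmetric]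
      ring_hom_uminus[OF ring_hom_to_fract, symmetric]
    using subring_add[OF K_subring xy(1,2)] subring_mult[OF K_subring xy(1,2)]
      subring_uminus[OF K_subring xy(1)] by simp_all
next
  fix x assume "x \<in> to_fract ` K" "x \<noteq> 0"
  then obtain x' where x': "x' \<in> K" "x = to_fract x'" "x' \<noteq> 0" using to_fract_eq_0_iff by auto
  then obtain y' where "y' \<in> K" "x' * y' = 1" using K_field unfolding is_subfield_def by blast
  then have "x * to_fract y' = 1"
    using x'(2) ring_hom_mult[OF ring_hom_to_fract, of x' y'] ring_hom_one[OF ring_hom_to_fract] by metis
  then show "\<exists>y\<in>to_fract ` K. x * y = 1" using \<open>y' \<in> K\<close> by blast
qed

lemma ring_hom_\<sigma>: "ring_hom \<sigma>"
  using \<sigma>_endo unfolding ring_endo_def ring_hom_def .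

lemma \<sigma>_K_nonzero: "\<forall>a\<in>K. \<sigma> a = 0 \<longrightarrow> a = 0"
proof (intro ballI impI)
  fix a assume a: "a \<in> K" "\<sigma> a = 0"
  show "a = 0"
  proof (rule ccontr)
    assume "a \<noteq> 0"
    then obtain y where "a * y = 1" using K_field a(1) unfolding is_subfield_def by blast
    then have "\<sigma> a * \<sigma> y = 1" using ring_hom_mult[OF ring_hom_\<sigma>] ring_hom_one[OF ring_hom_\<sigma>] by metis
    then show False using a(2) by simp
  qed
qed

lemma ring_hom_funpow: "ring_hom (\<sigma> ^^ i)"
proof (induction i)
  case 0
  then show ?case by (simp add: ring_hom_def)
next
  case (Suc i)
  have "\<sigma> ^^ Suc i = \<sigma> \<circ> (\<sigma> ^^ i)" by simp
  then show ?case using ring_hom_comp[OF Suc ring_hom_\<sigma>] by metis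
qed

lemma funpow_K: "(\<sigma> ^^ i) ` K \<subseteq> K"
proof (induction i)
  case (Suc i)
  then show ?case using \<sigma>_K by (auto simp: image_subset_iff)
qed simp

lemma funpow_ring_gen: "(\<sigma> ^^ i) ` ring_gen (K \<union> H) \<subseteq> ring_gen (K \<union> (\<sigma> ^^ i) ` H)"
proof -
  have "(\<sigma> ^^ i) ` ring_gen (K \<union> H) \<subseteq> ring_gen ((\<sigma> ^^ i) ` (K \<union> H))"
    by (rule ring_hom_image_ring_gen[OF ring_hom_funpow])
  also have "\<dots> \<subseteq> ring_gen (K \<union> (\<sigma> ^^ i) ` H)"
    unfolding image_Un by (intro ring_gen_mono Un_mono[OF funpow_K order_refl])
  finally show ?thesis .
qed

lemma alg_indep_over_to_fract_iff:
  assumes "finite X"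
  shows "alg_indep_over K X \<longleftrightarrow> alg_indep_over K_fract (to_fract ` X)"
proof
  assume "alg_indep_over K X"
  then show "alg_indep_over K_fract (to_fract ` X)"
    by (rule alg_indep_over_image[OF ring_hom_to_fract inj_to_fract]) (simp add: K_fract_def)
next
  assume "alg_indep_over K_fract (to_fract ` X)"
  moreover have "to_fract ` K \<subseteq> K_fract" "\<forall>a\<in>K. to_fract a = 0 \<longrightarrow> a = 0"
    by (simp_all add: K_fract_def to_fract_eq_0_iff)
  ultimately show "alg_indep_over K X"
    using alg_indep_over_if_image[OF ring_hom_to_fract inj_on_subset[OF inj_to_fract subset_UNIV]] assms
    by blast
qed

text \<open>The transcendence degree of \<open>K(H)\<close> over \<open>K\<close>, computed inside the domain.\<close>

definition alg_rank :: "'d set \<Rightarrow> nat" where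
  "alg_rank H = Max {card X | X. X \<subseteq> H \<and> alg_indep_over K X}"

lemma finite_indep_cards: "finite H \<Longrightarrow> finite {card X | X. X \<subseteq> H \<and> alg_indep_over K X}"
  by (rule finite_subset[of _ "card ` Pow H"]) auto

lemma card_le_alg_rank: "finite H \<Longrightarrow> X \<subseteq> H \<Longrightarrow> alg_indep_over K X \<Longrightarrow> card X \<le> alg_rank H"
  unfolding alg_rank_def by (rule Max_ge[OF finite_indep_cards]) auto

lemma alg_rank_basis:
  assumes "finite H"
  obtains X where "X \<subseteq> H" "alg_indep_over K X" "card X = alg_rank H"
proof -
  have "{card X | X. X \<subseteq> H \<and> alg_indep_over K X} \<noteq> {}"
    using alg_indep_over_empty[OF K_subring] by blast
  from Max_in[OF finite_indep_cards[OF assms] this]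
  have "alg_rank H \<in> {card X | X. X \<subseteq> H \<and> alg_indep_over K X}" unfolding alg_rank_def .
  then show thesis using that by auto
qed

lemma poly_algebraic_over_basis:
  assumes H: "finite H" and X: "X \<subseteq> H" "alg_indep_over K X" "card X = alg_rank H" and h: "h \<in> H"
  shows "poly_algebraic K_fract (to_fract ` X) (to_fract h)"
proof -
  have finX: "finite X" using H X(1) by (rule finite_subset[rotated])
  show ?thesis
  proof (cases "h \<in> X")
    case True
    then show ?thesis
      using poly_algebraic_member[OF subfield_subring[OF K_fract_subfield]] finX by simp
  next
    case False
    have "\<not> alg_indep_over K (insert h X)"
    proof
      assume "alg_indep_over K (insert h X)"
      then have "card (insert h X) \<le> alg_rank H" using X(1) h H by (intro card_le_alg_rank) auto
      then show False using False finX X(3) by simp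
    qed
    then have "\<not> alg_indep_over K_fract (insert (to_fract h) (to_fract ` X))"
      using alg_indep_over_to_fract_iff[of "insert h X"] finX by simp
    moreover have "to_fract h \<notin> to_fract ` X" using False inj_to_fract by (auto simp: inj_def)
    ultimately show ?thesis
      using X(2) alg_indep_over_to_fract_iff[OF finX]
      by (intro poly_algebraic_if_dependent_insert[OF subfield_subring[OF K_fract_subfield]]) auto
  qed
qed

lemma frac_of_subset_poly_fracs:
  assumes "A \<subseteq> ring_gen (K \<union> H)" "to_fract ` H \<subseteq> Y"
  shows "frac_of A \<subseteq> poly_fracs K_fract Y"
proof
  have "to_fract ` ring_gen (K \<union> H) \<subseteq> ring_gen (K_fract \<union> Y)"
    using ring_hom_image_ring_gen[OF ring_hom_to_fract, of "K \<union> H"] ring_gen_mono[of _ "K_fract \<union> Y"]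
      assms(2) unfolding K_fract_def by (metis image_Un order_trans Un_mono order_refl)
  also have "\<dots> \<subseteq> polys K_fract Y"
    by (rule ring_gen_subset_polys[OF subfield_subring[OF K_fract_subfield]])
  finally have to_polys: "to_fract ` A \<subseteq> polys K_fract Y" using assms(1) by blast
  fix z assume "z \<in> frac_of A"
  then obtain a b where ab: "a \<in> A" "b \<in> A" "b \<noteq> 0" "z = Fract a b" unfolding frac_of_def by auto
  then have "z = to_fract a / to_fract b" "to_fract b \<noteq> 0"
    using Fract_eq_to_fract_divide to_fract_eq_0_iff by auto
  then show "z \<in> poly_fracs K_fract Y" unfolding poly_fracs_def using ab(1,2) to_polys by blast
qed

lemma card_frac_indep_le:
  assumes "finite H" "finite X" and alg: "\<forall>h\<in>H. poly_algebraic K_fract (to_fract ` X) (to_fract h)"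
    and A: "A \<subseteq> ring_gen (K \<union> H)" and Z: "Z \<subseteq> frac_of A" "alg_indep_over K_fract Z"
  shows "card Z \<le> card X"
proof -
  have "Z \<subseteq> poly_fracs K_fract (to_fract ` X \<union> to_fract ` H)"
    using Z(1) frac_of_subset_poly_fracs[OF A, of "to_fract ` X \<union> to_fract ` H"] by auto
  then have "card Z \<le> card (to_fract ` X)"
    using assms alg by (intro card_indep_le_if_poly_algebraic[OF K_fract_subfield]) auto
  also have "\<dots> = card X" by (rule card_image[OF inj_on_subset[OF inj_to_fract subset_UNIV]])
  finally show ?thesis .
qed

lemma card_frac_indep_le_alg_rank:
  assumes "finite H" "A \<subseteq> ring_gen (K \<union> H)" "Z \<subseteq> frac_of A" "alg_indep_over K_fract Z"
  shows "card Z \<le> alg_rank H"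
proof -
  obtain X where X: "X \<subseteq> H" "alg_indep_over K X" "card X = alg_rank H"
    using alg_rank_basis[OF assms(1)] .
  have "finite X" using X(2) by (rule alg_indep_over_finite)
  moreover have "\<forall>h\<in>H. poly_algebraic K_fract (to_fract ` X) (to_fract h)"
    using poly_algebraic_over_basis[OF assms(1) X] by blast
  ultimately have "card Z \<le> card X" by (rule card_frac_indep_le[OF assms(1) _ _ assms(2-4)])
  with X(3) show ?thesis by simp
qed

lemma to_fract_indep_in_frac_of:
  assumes "X \<subseteq> ring_gen (K \<union> H)" "alg_indep_over K X"
  shows "to_fract ` X \<subseteq> frac_of (ring_gen (K \<union> H))" "alg_indep_over K_fract (to_fract ` X)"
    "card (to_fract ` X) = card X"
proof -
  have "1 \<in> ring_gen (K \<union> H)" by (rule subring_one[OF ring_gen_subring])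
  then show "to_fract ` X \<subseteq> frac_of (ring_gen (K \<union> H))"
    using assms(1) one_neq_zero unfolding frac_of_def to_fract_def by fastforce
  show "alg_indep_over K_fract (to_fract ` X)"
    using assms(2) alg_indep_over_to_fract_iff[OF alg_indep_over_finite[OF assms(2)]] by simp
  show "card (to_fract ` X) = card X" by (rule card_image[OF inj_on_subset[OF inj_to_fract subset_UNIV]])
qed

lemma card_indep_le_alg_rank:
  assumes "finite H" "X \<subseteq> ring_gen (K \<union> H)" "alg_indep_over K X"
  shows "card X \<le> alg_rank H"
proof -
  note frac = to_fract_indep_in_frac_of[OF assms(2,3)]
  from card_frac_indep_le_alg_rank[OF assms(1) order_refl frac(1,2)] show ?thesis by (simp add: frac(3))
qed

lemma trdeg_eq_alg_rank:
  assumes "finite H"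
  shows "trdeg K_fract (frac_of (ring_gen (K \<union> H))) = alg_rank H"
  unfolding trdeg_def
proof (rule cSup_eq_maximum)
  obtain X where X: "X \<subseteq> H" "alg_indep_over K X" "card X = alg_rank H"
    using alg_rank_basis[OF assms] .
  then have "X \<subseteq> ring_gen (K \<union> H)" using ring_gen_superset by blast
  note frac = to_fract_indep_in_frac_of[OF this X(2)]
  show "alg_rank H \<in> {card Z | Z. Z \<subseteq> frac_of (ring_gen (K \<union> H)) \<and> alg_indep K_fract Z}"
    unfolding mem_Collect_eq
    by (rule exI[of _ "to_fract ` X"]) (simp add: frac X(3) alg_indep_if_alg_indep_over)
  fix c assume "c \<in> {card Z | Z. Z \<subseteq> frac_of (ring_gen (K \<union> H)) \<and> alg_indep K_fract Z}"
  then obtain Z where Z: "c = card Z" "Z \<subseteq> frac_of (ring_gen (K \<union> H))" "alg_indep K_fract Z"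
    by auto
  from card_frac_indep_le_alg_rank[OF assms order_refl Z(2)]
  show "c \<le> alg_rank H"
    using Z(1,3) alg_indep_over_if_alg_indep[OF subfield_subring[OF K_fract_subfield]] by simp
qed

lemma alg_rank_union_le:
  assumes "finite H" "finite H'"
  shows "alg_rank (H \<union> H') \<le> alg_rank H + alg_rank H'"
proof -
  obtain X where X: "X \<subseteq> H" "alg_indep_over K X" "card X = alg_rank H"
    using alg_rank_basis[OF assms(1)] .
  obtain X' where X': "X' \<subseteq> H'" "alg_indep_over K X'" "card X' = alg_rank H'"
    using alg_rank_basis[OF assms(2)] .
  obtain Y where Y: "Y \<subseteq> H \<union> H'" "alg_indep_over K Y" "card Y = alg_rank (H \<union> H')"
    using alg_rank_basis[of "H \<union> H'"] assms by blast
  have fin: "finite (X \<union> X')" using X(2) X'(2) by (simp add: alg_indep_over_finite)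
  have "poly_algebraic K_fract (to_fract ` (X \<union> X')) (to_fract h)" if "h \<in> H \<union> H'" for h
    using that poly_algebraic_over_basis[OF assms(1) X] poly_algebraic_over_basis[OF assms(2) X'] fin
    by (auto intro: poly_algebraic_mono)
  moreover have "Y \<subseteq> ring_gen (K \<union> (H \<union> H'))" using Y(1) ring_gen_superset by blast
  note frac = to_fract_indep_in_frac_of[OF this Y(2)]
  ultimately have "card (to_fract ` Y) \<le> card (X \<union> X')"
    using assms fin by (intro card_frac_indep_le[OF _ _ _ order_refl frac(1,2)]) auto
  then show ?thesis using frac(3) Y(3) X(3) X'(3) card_Un_le[of X X'] by simp
qed

lemma indep_preimage:
  assumes "Y \<subseteq> \<sigma> ` H" "alg_indep_over K Y" "finite H"
  obtains X where "X \<subseteq> H" "inj_on \<sigma> X" "\<sigma> ` X = Y" "alg_indep_over K X"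
proof -
  have "\<exists>X\<subseteq>H. inj_on \<sigma> X \<and> Y = \<sigma> ` X" using assms(1) by (simp add: subset_image_inj)
  then obtain X where X: "X \<subseteq> H" "inj_on \<sigma> X" "Y = \<sigma> ` X" by (elim exE conjE)
  have "finite X" using X(1) assms(3) by (rule finite_subset)
  have "alg_indep_over K X"
    by (rule alg_indep_over_if_image[OF ring_hom_\<sigma> X(2) _ \<sigma>_K \<sigma>_K_nonzero \<open>finite X\<close>])
      (use assms(2) X(3) in simp)
  with X that show thesis by simp
qed

text \<open>A nonzero element of \<open>K[H]\<close> killed by \<open>\<sigma>\<close> can be added to the preimage of a basis of
  \<open>\<sigma> H\<close>, so the rank drops strictly.\<close>

lemma alg_rank_image:
  assumes "finite H"
  shows "alg_rank (\<sigma> ` H) \<le> alg_rank H"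
    and "p \<in> ring_gen (K \<union> H) \<Longrightarrow> p \<noteq> 0 \<Longrightarrow> \<sigma> p = 0 \<Longrightarrow> alg_rank (\<sigma> ` H) < alg_rank H"
proof -
  obtain Y where Y: "Y \<subseteq> \<sigma> ` H" "alg_indep_over K Y" "card Y = alg_rank (\<sigma> ` H)"
    using alg_rank_basis[of "\<sigma> ` H"] assms by blast
  obtain X where X: "X \<subseteq> H" "inj_on \<sigma> X" "\<sigma> ` X = Y" "alg_indep_over K X"
    using indep_preimage[OF Y(1,2) assms] .
  have card_X: "card X = alg_rank (\<sigma> ` H)" using X(2,3) Y(3) card_image by fastforce
  then show "alg_rank (\<sigma> ` H) \<le> alg_rank H" using card_le_alg_rank[OF assms X(1,4)] by simp
  assume p: "p \<in> ring_gen (K \<union> H)" "p \<noteq> 0" "\<sigma> p = 0"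
  have finX: "finite X" using X(4) by (rule alg_indep_over_finite)
  have "p \<notin> X" using zero_notin_alg_indep_over[OF K_subring Y(2)] X(3) p(3) by force
  have "alg_indep_over K (insert p X)"
    using X Y(2) \<sigma>_K \<sigma>_K_nonzero finX \<open>p \<notin> X\<close> p(2,3)
    by (intro alg_indep_over_insert_kernel[OF ring_hom_\<sigma>]) auto
  moreover have "insert p X \<subseteq> ring_gen (K \<union> H)" using p(1) X(1) ring_gen_superset by blast
  ultimately have "card (insert p X) \<le> alg_rank H" by (intro card_indep_le_alg_rank[OF assms])
  then show "alg_rank (\<sigma> ` H) < alg_rank H" using card_X finX \<open>p \<notin> X\<close> by simp
qed

lemma ring_gen_orbit_UNIV:
  assumes "ring_gen (K \<union> (\<Union>i. (\<sigma> ^^ i) ` S)) = UNIV"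
  shows "ring_gen (\<Union>i. (\<sigma> ^^ i) ` ring_gen (K \<union> S)) = UNIV"
proof -
  let ?T = "\<Union>i. (\<sigma> ^^ i) ` ring_gen (K \<union> S)"
  have "K \<subseteq> (\<sigma> ^^ 0) ` ring_gen (K \<union> S)" using ring_gen_superset[of "K \<union> S"] by auto
  also have "\<dots> \<subseteq> ?T" by (rule UN_upper[OF UNIV_I])
  finally have "K \<subseteq> ?T" .
  moreover have "(\<Union>i. (\<sigma> ^^ i) ` S) \<subseteq> ?T"
    using ring_gen_superset[of "K \<union> S"] by (intro UN_mono image_mono) auto
  ultimately have "ring_gen (K \<union> (\<Union>i. (\<sigma> ^^ i) ` S)) \<subseteq> ring_gen ?T"
    by (intro ring_gen_mono Un_least)
  then show ?thesis using assms by (simp add: top.extremum_unique)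
qed

end

section \<open>Growth of the rank along the orbit of the generators\<close>

lemma iterate_subadditivity_gap:
  fixes h :: "nat \<Rightarrow> nat"
  assumes "\<forall>N\<ge>N0. h (m + N) + m \<le> h m + h N"
  shows "h (N0 + k * m) + k * m \<le> h N0 + k * h m"
proof (induction k)
  case (Suc k)
  have "h (m + (N0 + k * m)) + m \<le> h m + h (N0 + k * m)" using assms by simp
  with Suc.IH show ?case by (simp add: algebra_simps)
qed simp

text \<open>Iterating the inequality shows \<open>j * m \<le> h m\<close> for every \<open>j\<close>, which is absurd.\<close>

lemma no_uniform_subadditivity_gap:
  fixes h :: "nat \<Rightarrow> nat"
  shows "\<not> (\<forall>m\<ge>1. \<forall>\<^sub>F N in sequentially. h (m + N) + m \<le> h m + h N)"
proof
  assume gap: "\<forall>m\<ge>1. \<forall>\<^sub>F N in sequentially. h (m + N) + m \<le> h m + h N"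
  have "\<forall>m\<ge>1. j * m \<le> h m" for j
  proof (induction j)
    case (Suc j)
    show ?case
    proof (intro allI impI)
      fix m :: nat assume "m \<ge> 1"
      then obtain N0 where N0: "\<forall>N\<ge>N0. h (m + N) + m \<le> h m + h N"
        using gap unfolding eventually_sequentially by blast
      define k where "k = h N0 + 1"
      have "N0 + k * m \<ge> 1" unfolding k_def using \<open>m \<ge> 1\<close> by simp
      then have "j * (N0 + k * m) \<le> h (N0 + k * m)" using Suc.IH by blast
      with iterate_subadditivity_gap[OF N0, of k]
      have "j * (k * m) + k * m \<le> h N0 + k * h m" by (simp add: algebra_simps)
      then have le: "k * (Suc j * m) \<le> k * h m + h N0" by (simp add: algebra_simps)
      show "Suc j * m \<le> h m"
      proof (rule ccontr)
        assume "\<not> Suc j * m \<le> h m"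
        then have "k * (h m + 1) \<le> k * (Suc j * m)" by (intro mult_le_mono2) simp
        with le have "k \<le> h N0" by (simp add: algebra_simps)
        then show False unfolding k_def by simp
      qed
    qed
  qed simp
  then have "(h 1 + 1) * 1 \<le> h 1" by blast
  then show False by simp
qed

locale difference_generated = difference_domain +
  fixes S :: "'a set"
  assumes finite_S: "finite S"
    and generates: "ring_gen (\<Union>i. (\<sigma> ^^ i) ` ring_gen (K \<union> S)) = UNIV"
begin

definition orbit_gens :: "nat \<Rightarrow> 'a set" where
  "orbit_gens m = (\<Union>i<m. (\<sigma> ^^ i) ` S)"

definition growth :: "nat \<Rightarrow> nat" where
  "growth m = alg_rank (orbit_gens m)"

definition kernel_meets :: "nat \<Rightarrow> 'a set \<Rightarrow> bool" where
  "kernel_meets n H \<longleftrightarrow> (\<exists>p\<in>ring_gen (K \<union> (\<sigma> ^^ n) ` H). p \<noteq> 0 \<and> \<sigma> p = 0)"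

lemma finite_orbit_gens: "finite (orbit_gens m)"
  unfolding orbit_gens_def using finite_S by simp

lemma orbit_gens_mono: "m \<le> m' \<Longrightarrow> orbit_gens m \<subseteq> orbit_gens m'"
  unfolding orbit_gens_def by (intro UN_mono) auto

lemma R_m_eq_ring_gen_orbit_gens:
  assumes "m \<ge> 1"
  shows "R_m \<sigma> (ring_gen (K \<union> S)) m = ring_gen (K \<union> orbit_gens m)"
  unfolding R_m_def
proof (rule antisym)
  let ?T = "\<Union>i<m. (\<sigma> ^^ i) ` ring_gen (K \<union> S)"
  have "(\<sigma> ^^ i) ` ring_gen (K \<union> S) \<subseteq> ring_gen (K \<union> orbit_gens m)" if "i < m" for i
  proof -
    have "(\<sigma> ^^ i) ` S \<subseteq> orbit_gens m" using that unfolding orbit_gens_def by auto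
    then have "ring_gen (K \<union> (\<sigma> ^^ i) ` S) \<subseteq> ring_gen (K \<union> orbit_gens m)"
      by (intro ring_gen_mono Un_mono order_refl)
    with funpow_ring_gen[of i S] show ?thesis by (rule subset_trans)
  qed
  then show "ring_gen ?T \<subseteq> ring_gen (K \<union> orbit_gens m)"
    by (intro ring_gen_least[OF ring_gen_subring] UN_least) simp
  have "K \<subseteq> (\<sigma> ^^ 0) ` ring_gen (K \<union> S)" using ring_gen_superset[of "K \<union> S"] by auto
  also have "\<dots> \<subseteq> ?T" using assms by (intro UN_upper) simp
  finally have "K \<subseteq> ?T" .
  moreover have "orbit_gens m \<subseteq> ?T"
    unfolding orbit_gens_def using ring_gen_superset[of "K \<union> S"] by (intro UN_mono image_mono) auto
  ultimately show "ring_gen (K \<union> orbit_gens m) \<subseteq> ring_gen ?T" by (intro ring_gen_mono Un_least)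
qed

lemma dim_c_eq_growth:
  assumes "m \<ge> 1"
  shows "dim_c K \<sigma> (ring_gen (K \<union> S)) m = growth m"
proof -
  have "(\<lambda>x. Fract x 1) ` K = K_fract" by (simp add: K_fract_def to_fract_def[abs_def])
  then show ?thesis
    unfolding dim_c_def growth_def R_m_eq_ring_gen_orbit_gens[OF assms]
    by (simp add: trdeg_eq_alg_rank[OF finite_orbit_gens])
qed

lemma orbit_gens_add: "orbit_gens (m + N) = orbit_gens m \<union> (\<sigma> ^^ m) ` orbit_gens N"
proof -
  have "{..<m + N} = {..<m} \<union> (\<lambda>j. m + j) ` {..<N}"
  proof (rule set_eqI)
    fix i
    show "i \<in> {..<m + N} \<longleftrightarrow> i \<in> {..<m} \<union> (\<lambda>j. m + j) ` {..<N}"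
      by (cases "i < m") (auto simp: image_iff intro!: bexI[of _ "i - m"])
  qed
  then show ?thesis
    unfolding orbit_gens_def by (simp add: image_UN image_comp funpow_add comp_def UN_Un)
qed

lemma alg_rank_funpow_image:
  assumes "finite H"
  shows "alg_rank ((\<sigma> ^^ m) ` H) + card {n. n < m \<and> kernel_meets n H} \<le> alg_rank H"
proof (induction m)
  case (Suc m)
  have img: "(\<sigma> ^^ Suc m) ` H = \<sigma> ` (\<sigma> ^^ m) ` H" by (simp add: image_comp)
  have fin: "finite ((\<sigma> ^^ m) ` H)" using assms by simp
  show ?case
  proof (cases "kernel_meets m H")
    case True
    have "{n. n < Suc m \<and> kernel_meets n H} = insert m {n. n < m \<and> kernel_meets n H}"
      using True less_Suc_eq by auto
    moreover have "alg_rank ((\<sigma> ^^ Suc m) ` H) < alg_rank ((\<sigma> ^^ m) ` H)"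
      using True alg_rank_image(2)[OF fin] unfolding img kernel_meets_def by blast
    ultimately show ?thesis using Suc.IH by simp
  next
    case False
    have "{n. n < Suc m \<and> kernel_meets n H} = {n. n < m \<and> kernel_meets n H}"
      using False less_Suc_eq by auto
    then show ?thesis using Suc.IH alg_rank_image(1)[OF fin] unfolding img by simp
  qed
qed simp

lemma growth_add_le:
  "growth (m + N) + card {n. n < m \<and> kernel_meets n (orbit_gens N)} \<le> growth m + growth N"
proof -
  have "finite ((\<sigma> ^^ m) ` orbit_gens N)" using finite_orbit_gens by simp
  from alg_rank_union_le[OF finite_orbit_gens[of m] this]
    alg_rank_funpow_image[OF finite_orbit_gens[of N], of m]
  show ?thesis unfolding growth_def orbit_gens_add by simp
qed

lemma mem_ring_gen_orbit_gens: "\<exists>M. x \<in> ring_gen (K \<union> orbit_gens M)"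
proof -
  let ?U = "\<Union>M. ring_gen (K \<union> orbit_gens M)"
  have "is_subring ?U"
    by (intro subring_UN_mono monoI ring_gen_subring ring_gen_mono Un_mono order_refl orbit_gens_mono)
  moreover have "(\<sigma> ^^ i) ` ring_gen (K \<union> S) \<subseteq> ?U" for i
  proof -
    have "(\<sigma> ^^ i) ` S \<subseteq> orbit_gens (Suc i)" unfolding orbit_gens_def by auto
    then have "ring_gen (K \<union> (\<sigma> ^^ i) ` S) \<subseteq> ring_gen (K \<union> orbit_gens (Suc i))"
      by (intro ring_gen_mono Un_mono order_refl)
    with funpow_ring_gen[of i S] show ?thesis by auto
  qed
  ultimately have "ring_gen (\<Union>i. (\<sigma> ^^ i) ` ring_gen (K \<union> S)) \<subseteq> ?U"
    by (intro ring_gen_least UN_least)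
  then show ?thesis unfolding generates by auto
qed

lemma eventually_kernel_meets:
  assumes "\<not> inj_on \<sigma> (range (\<sigma> ^^ n))"
  shows "\<forall>\<^sub>F N in sequentially. kernel_meets n (orbit_gens N)"
proof -
  obtain x y where xy: "\<sigma> ((\<sigma> ^^ n) x) = \<sigma> ((\<sigma> ^^ n) y)" "(\<sigma> ^^ n) x \<noteq> (\<sigma> ^^ n) y"
    using assms unfolding inj_on_def by auto
  obtain M where M: "x - y \<in> ring_gen (K \<union> orbit_gens M)" using mem_ring_gen_orbit_gens by blast
  define p where "p = (\<sigma> ^^ n) (x - y)"
  have p: "p \<noteq> 0" "\<sigma> p = 0"
    unfolding p_def ring_hom_diff[OF ring_hom_funpow] ring_hom_diff[OF ring_hom_\<sigma>] using xy by simp_all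
  have p_in: "p \<in> ring_gen (K \<union> (\<sigma> ^^ n) ` orbit_gens M)"
    unfolding p_def using M by (intro subsetD[OF funpow_ring_gen imageI])
  have "kernel_meets n (orbit_gens N)" if "N \<ge> M" for N
  proof -
    have "p \<in> ring_gen (K \<union> (\<sigma> ^^ n) ` orbit_gens N)"
      using p_in by (intro subsetD[OF ring_gen_mono[OF Un_mono[OF order_refl image_mono[OF orbit_gens_mono[OF that]]]]])
    then show ?thesis unfolding kernel_meets_def using p by (intro bexI[of _ p]) simp_all
  qed
  then show ?thesis unfolding eventually_sequentially by blast
qed

lemma eventually_injective: "\<exists>n. inj_on \<sigma> (range (\<sigma> ^^ n))"
proof (rule ccontr)
  assume "\<nexists>n. inj_on \<sigma> (range (\<sigma> ^^ n))"
  then have ev: "\<forall>\<^sub>F N in sequentially. kernel_meets n (orbit_gens N)" for n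
    using eventually_kernel_meets by blast
  have "\<forall>\<^sub>F N in sequentially. growth (m + N) + m \<le> growth m + growth N" for m
  proof -
    have "\<forall>\<^sub>F N in sequentially. \<forall>n\<in>{..<m}. kernel_meets n (orbit_gens N)"
      using ev by (intro eventually_ball_finite) auto
    then show ?thesis
    proof eventually_elim
      case (elim N)
      then have "{n. n < m \<and> kernel_meets n (orbit_gens N)} = {..<m}" by auto
      then show ?case using growth_add_le[of m N] by simp
    qed
  qed
  then show False using no_uniform_subadditivity_gap[of growth] by blast
qed

lemma injective_within_growth_constant:
  assumes "\<forall>\<^sub>F m in sequentially. int (dim_c K \<sigma> (ring_gen (K \<union> S)) m) = a * int m + b"
  shows "\<exists>n::nat. int n \<le> b \<and> inj_on \<sigma> (range (\<sigma> ^^ n))"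
proof (rule ccontr)
  assume none: "\<not> ?thesis"
  have "\<forall>\<^sub>F m in sequentially. int (growth m) = a * int m + b"
    using assms eventually_ge_at_top[of 1] by eventually_elim (simp add: dim_c_eq_growth)
  then obtain m0 where lin: "\<And>m. m \<ge> m0 \<Longrightarrow> int (growth m) = a * int m + b"
    unfolding eventually_sequentially by blast
  have "int (growth (m0 + m0)) \<le> int (growth m0) + int (growth m0)"
    using growth_add_le[of m0 m0] by simp
  then have b: "b \<ge> 0" using lin[of m0] lin[of "m0 + m0"] by (simp add: algebra_simps)
  define B where "B = nat b"
  have "\<not> inj_on \<sigma> (range (\<sigma> ^^ n))" if "n \<le> B" for n
  proof -
    have "int n \<le> b" using that b unfolding B_def by (simp add: le_nat_iff)
    then show ?thesis using none by blast
  qed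
  then have "\<forall>\<^sub>F N in sequentially. \<forall>n\<in>{..B}. kernel_meets n (orbit_gens N)"
    by (intro eventually_ball_finite ballI eventually_kernel_meets) auto
  then obtain N0 where N0: "\<forall>N\<ge>N0. \<forall>n\<in>{..B}. kernel_meets n (orbit_gens N)"
    unfolding eventually_sequentially by blast
  define N where "N = N0 + m0"
  have N: "\<forall>n\<in>{..B}. kernel_meets n (orbit_gens N)" "N \<ge> m0" using N0 unfolding N_def by simp_all
  define m where "m = B + 1 + m0"
  have "{..B} \<subseteq> {n. n < m \<and> kernel_meets n (orbit_gens N)}" using N(1) unfolding m_def by auto
  then have "B + 1 \<le> card {n. n < m \<and> kernel_meets n (orbit_gens N)}"
    using card_mono[of "{n. n < m \<and> kernel_meets n (orbit_gens N)}" "{..B}"] by simp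
  with growth_add_le[of m N] have "int (growth (m + N)) + int B + 1 \<le> int (growth m) + int (growth N)"
    by linarith
  moreover have "m \<ge> m0" "N + m \<ge> m0" using N(2) unfolding m_def by simp_all
  ultimately have "int B + 1 \<le> b" using lin[of m] lin[of N] lin[of "m + N"] N(2) by (simp add: algebra_simps)
  then show False using b unfolding B_def by simp
qed

end

theorem lemma4p10:
  fixes K :: "'d::idom set" and \<sigma> :: "'d \<Rightarrow> 'd"
  assumes K_field: "is_subfield K"
    and \<sigma>_endo: "ring_endo \<sigma>"
    and \<sigma>_K: "\<sigma> ` K \<subseteq> K"
    and fg: "\<exists>S. finite S \<and> ring_gen (K \<union> (\<Union>i. (\<sigma> ^^ i) ` S)) = UNIV"
  shows "(\<exists>n::nat. inj_on \<sigma> (range (\<sigma> ^^ n))) \<and>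
    (\<forall>R S a b. finite S \<and> R = ring_gen (K \<union> S) \<and>
        ring_gen (\<Union>i. (\<sigma> ^^ i) ` R) = UNIV \<and>
        (\<forall>\<^sub>F m in sequentially. int (dim_c K \<sigma> R m) = a * int m + b)
      \<longrightarrow> (\<exists>n::nat. int n \<le> b \<and> inj_on \<sigma> (range (\<sigma> ^^ n))))"
proof -
  interpret difference_domain K \<sigma>
    using K_field \<sigma>_endo \<sigma>_K by unfold_locales
  obtain S where "finite S" "ring_gen (K \<union> (\<Union>i. (\<sigma> ^^ i) ` S)) = UNIV"
    using fg by blast
  then interpret difference_generated K \<sigma> S
    by unfold_locales (simp_all add: ring_gen_orbit_UNIV)
  have "\<exists>n::nat. int n \<le> b \<and> inj_on \<sigma> (range (\<sigma> ^^ n))"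
    if "finite S'" "ring_gen (\<Union>i. (\<sigma> ^^ i) ` ring_gen (K \<union> S')) = UNIV"
      "\<forall>\<^sub>F m in sequentially. int (dim_c K \<sigma> (ring_gen (K \<union> S')) m) = a * int m + b" for S' a b
  proof -
    interpret generated': difference_generated K \<sigma> S' by unfold_locales (use that in auto)
    show ?thesis using that(3) by (rule generated'.injective_within_growth_constant)
  qed
  then show ?thesis using eventually_injective by blast
qed

end
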